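(* For the diamond network with orthogonal broadcast links, bit-pipe capacities $C_1,C_2$, and discrete memoryless MAC $p(y|x_1,x_2)$, the capacity satisfies $$C^\diamond\le \max_{p(x_1,x_2)}\ \min_{p(u|y)}\ \min\left\{\begin{array}{l} C_1+C_2,\\ C_1+I(X_2;Y|X_1),\\ C_2+I(X_1;Y|X_2),\\ I(X_1X_2;Y),\\ \tfrac12\big(C_1+C_2+I(X_1X_2;Y|U)+I(X_1;U|X_2)+I(X_2;U|X_1)\big)\end{array}\right\},$$ where the minimum is over auxiliary channels $p(u|y)$ (with $U$ in an arbitrary finite alphabet) and all quantities are evaluated for the joint pmf $p(x_1,x_2)p(y|x_1,x_2)p(u|y)$.
   Context: Diamond network with orthogonal broadcast component: a message $W$ uniformly distributed on $\{1,\dots,2^{nR}\}$ is encoded into $(V_1^n,V_2^n)$ with $H(V_1^n)\le nC_1$, $H(V_2^n)\le nC_2$; $V_i^n$ is delivered without error to relay $i$, which maps it to $X_i^n\in\mathcal X_i^n$. $(X_1^n,X_2^n)$ is sent over $n$ uses of a memoryless MAC $p(y|x_1,x_2)$ with finite alphabets, giving $Y^n$, from which a decoder forms $\hat W$. $R$ is achievable if $\Pr(\hat W\ne W)$ can be made arbitrarily small for some $n$; $C^\diamond$ is the supremum of achievable rates. Logarithms base 2. *)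

theory Defs
  imports Complex_Main "HOL-Library.FuncSet"
begin

text \<open>Entropy (base 2) of the random variable f under the pmf P on the finite
  sample set S. Convention: 0 log 0 = 0 (holds since log 2 0 = 0 in Isabelle).\<close>
definition ent :: "'d set \<Rightarrow> ('d \<Rightarrow> real) \<Rightarrow> ('d \<Rightarrow> 'e) \<Rightarrow> real" where
  "ent S P f = - (\<Sum>z\<in>f ` S. (\<Sum>d\<in>{d\<in>S. f d = z}. P d) * log 2 (\<Sum>d\<in>{d\<in>S. f d = z}. P d))"

definition cmi :: "'d set \<Rightarrow> ('d \<Rightarrow> real) \<Rightarrow> ('d \<Rightarrow> 'e) \<Rightarrow> ('d \<Rightarrow> 'f) \<Rightarrow> ('d \<Rightarrow> 'g) \<Rightarrow> real" where
  "cmi S P A B C = ent S P (\<lambda>d. (A d, C d)) + ent S P (\<lambda>d. (B d, C d))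
                   - ent S P (\<lambda>d. (A d, B d, C d)) - ent S P C"

definition mi :: "'d set \<Rightarrow> ('d \<Rightarrow> real) \<Rightarrow> ('d \<Rightarrow> 'e) \<Rightarrow> ('d \<Rightarrow> 'f) \<Rightarrow> real" where
  "mi S P A B = cmi S P A B (\<lambda>_. ())"

definition is_channel :: "('a::finite \<Rightarrow> 'b::finite \<Rightarrow> 'c::finite \<Rightarrow> real) \<Rightarrow> bool" where
  "is_channel W \<longleftrightarrow> (\<forall>x1 x2 y. 0 \<le> W x1 x2 y) \<and> (\<forall>x1 x2. (\<Sum>y\<in>UNIV. W x1 x2 y) = 1)"

text \<open>Number of messages: W is uniform on a set of size ceil(2^(nR)).\<close>
definition num_msgs :: "nat \<Rightarrow> real \<Rightarrow> nat" where
  "num_msgs n R = nat \<lceil>2 powr (real n * R)\<rceil>"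

text \<open>Average error probability of a code of block length n with M messages
  (messages 0..M-1): encoders f1, f2 produce V1^n, V2^n (coded as naturals),
  relays g1, g2 map them to X_i^n (sequences, index t < n), decoder dec maps y^n to a message.\<close>
definition err_prob ::
  "('a::finite \<Rightarrow> 'b::finite \<Rightarrow> 'c::finite \<Rightarrow> real) \<Rightarrow> nat \<Rightarrow> nat \<Rightarrow>
   (nat \<Rightarrow> nat) \<Rightarrow> (nat \<Rightarrow> nat) \<Rightarrow> (nat \<Rightarrow> nat \<Rightarrow> 'a) \<Rightarrow> (nat \<Rightarrow> nat \<Rightarrow> 'b) \<Rightarrow>
   ((nat \<Rightarrow> 'c) \<Rightarrow> nat) \<Rightarrow> real" where
  "err_prob W n M f1 f2 g1 g2 dec =
     (1 / real M) * (\<Sum>w<M. \<Sum>y\<in>{..<n} \<rightarrow>\<^sub>E (UNIV::'c set).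
        (\<Prod>t<n. W (g1 (f1 w) t) (g2 (f2 w) t) (y t)) * (if dec y \<noteq> w then 1 else 0))"

definition achievable ::
  "('a::finite \<Rightarrow> 'b::finite \<Rightarrow> 'c::finite \<Rightarrow> real) \<Rightarrow> real \<Rightarrow> real \<Rightarrow> real \<Rightarrow> bool" where
  "achievable W C1 C2 R \<longleftrightarrow>
     (\<forall>\<epsilon>>0. \<exists>n>0. \<exists>f1 f2 (g1::nat \<Rightarrow> nat \<Rightarrow> 'a) (g2::nat \<Rightarrow> nat \<Rightarrow> 'b) (dec::(nat \<Rightarrow> 'c) \<Rightarrow> nat).
        ent {..<num_msgs n R} (\<lambda>_. 1 / real (num_msgs n R)) f1 \<le> real n * C1 \<and>
        ent {..<num_msgs n R} (\<lambda>_. 1 / real (num_msgs n R)) f2 \<le> real n * C2 \<and>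
        err_prob W n (num_msgs n R) f1 f2 g1 g2 dec \<le> \<epsilon>)"

definition diamond_capacity ::
  "('a::finite \<Rightarrow> 'b::finite \<Rightarrow> 'c::finite \<Rightarrow> real) \<Rightarrow> real \<Rightarrow> real \<Rightarrow> real" where
  "diamond_capacity W C1 C2 = Sup {R. achievable W C1 C2 R}"

definition input_pmfs :: "('a::finite \<Rightarrow> 'b::finite \<Rightarrow> real) set" where
  "input_pmfs = {p. (\<forall>x1 x2. 0 \<le> p x1 x2) \<and> (\<Sum>x1\<in>UNIV. \<Sum>x2\<in>UNIV. p x1 x2) = 1}"

definition aux_channels :: "(nat \<times> ('c::finite \<Rightarrow> nat \<Rightarrow> real)) set" where
  "aux_channels = {(k, q). (\<forall>y u. 0 \<le> q y u) \<and> (\<forall>y. (\<Sum>u<k. q y u) = 1)}"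

definition bound_term ::
  "('a::finite \<Rightarrow> 'b::finite \<Rightarrow> 'c::finite \<Rightarrow> real) \<Rightarrow> real \<Rightarrow> real \<Rightarrow>
   ('a \<Rightarrow> 'b \<Rightarrow> real) \<Rightarrow> nat \<Rightarrow> ('c \<Rightarrow> nat \<Rightarrow> real) \<Rightarrow> real" where
  "bound_term W C1 C2 p k q =
    (let S = (UNIV::'a set) \<times> (UNIV::'b set) \<times> (UNIV::'c set) \<times> {..<k};
         P = (\<lambda>(x1, x2, y, u). p x1 x2 * W x1 x2 y * q y u);
         X1 = (\<lambda>(x1::'a, x2::'b, y::'c, u::nat). x1);
         X2 = (\<lambda>(x1::'a, x2::'b, y::'c, u::nat). x2);
         Y = (\<lambda>(x1::'a, x2::'b, y::'c, u::nat). y);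
         U = (\<lambda>(x1::'a, x2::'b, y::'c, u::nat). u)
     in min (C1 + C2)
        (min (C1 + cmi S P X2 Y X1)
        (min (C2 + cmi S P X1 Y X2)
        (min (mi S P (\<lambda>d. (X1 d, X2 d)) Y)
             ((C1 + C2 + cmi S P (\<lambda>d. (X1 d, X2 d)) Y U + cmi S P X1 U X2 + cmi S P X2 U X1) / 2)))))"

definition diamond_bound ::
  "('a::finite \<Rightarrow> 'b::finite \<Rightarrow> 'c::finite \<Rightarrow> real) \<Rightarrow> real \<Rightarrow> real \<Rightarrow> real" where
  "diamond_bound W C1 C2 =
     (SUP p\<in>input_pmfs. INF kq\<in>aux_channels. bound_term W C1 C2 p (fst kq) (snd kq))"

end

theory Submission
  imports Defs "HOL-Real_Asymp.Real_Asymp"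
begin

text \<open>Fix a code with \<open>M\<close> messages, block length \<open>n\<close> and error probability at most \<open>a\<close>,
  and pass the output block letter by letter through an auxiliary channel \<open>q(u|y)\<close>. Fano's
  inequality gives \<open>H(W|Y\<^sup>n) \<le> a log M + G(a)\<close> with \<open>G(a) = -log(1-a) - a log a\<close>, and each
  term of the bound is a chain-rule estimate of \<open>H(W) = log M\<close>. The first four come from
  \<open>H(W) \<le> H(g(W)) + H(W|Y\<^sup>n) + I(W;Y\<^sup>n|g(W))\<close> with \<open>g(W)\<close> both relay messages, one of
  them, or nothing. The fifth adds \<open>H(W) \<le> H(V\<^sub>1V\<^sub>2) + H(W|Y\<^sup>n)\<close> to
  \<open>H(W) \<le> H(W|Y\<^sup>n) + I(W;Y\<^sup>nU\<^sup>n)\<close> and discards \<open>I(V\<^sub>1;V\<^sub>2|U\<^sup>n) \<ge> 0\<close>.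
  The channels being memoryless, block entropies given \<open>W\<close> are \<open>n\<close> times single-letter ones,
  and the remaining block entropies are at most \<open>n\<close> times those of the letter at a uniformly
  random time, i.e. under the time-averaged input pmf. Hence \<open>(1 - a) R - G(a)\<close> is below the
  bound for every achievable \<open>R\<close>, and \<open>a \<rightarrow> 0\<close> concludes.\<close>

section \<open>Finite information measures\<close>

definition pmf_on :: "'d set \<Rightarrow> ('d \<Rightarrow> real) \<Rightarrow> bool" where
  "pmf_on S P \<longleftrightarrow> finite S \<and> (\<forall>d\<in>S. 0 \<le> P d) \<and> sum P S = 1"

definition law :: "'d set \<Rightarrow> ('d \<Rightarrow> real) \<Rightarrow> ('d \<Rightarrow> 'e) \<Rightarrow> 'e \<Rightarrow> real" where
  "law S P f z = sum P {d\<in>S. f d = z}"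

definition cond_ent :: "'d set \<Rightarrow> ('d \<Rightarrow> real) \<Rightarrow> ('d \<Rightarrow> 'e) \<Rightarrow> ('d \<Rightarrow> 'f) \<Rightarrow> real" where
  "cond_ent S P A C = ent S P (\<lambda>d. (A d, C d)) - ent S P C"

lemma law_nonneg: "\<forall>d\<in>S. 0 \<le> P d \<Longrightarrow> 0 \<le> law S P f z"
  unfolding law_def by (intro sum_nonneg) auto

lemma law_ge:
  assumes "finite S" "\<forall>d\<in>S. 0 \<le> P d" "d \<in> S"
  shows "P d \<le> law S P f (f d)"
  unfolding law_def using assms by (intro member_le_sum) auto

lemma law_pos:
  assumes "finite S" "\<forall>d\<in>S. 0 \<le> P d" "d \<in> S" "0 < P d"
  shows "0 < law S P f (f d)"
  using law_ge[OF assms(1-3), of f] assms(4) by linarith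

lemma law_eq_sum_if:
  assumes "finite S"
  shows "law S P f z = (\<Sum>d\<in>S. if f d = z then P d else 0)"
  unfolding law_def using sum.inter_filter[OF assms] by simp

lemma sum_mult_comp_eq_sum_law:
  assumes "finite S"
  shows "(\<Sum>d\<in>S. P d * \<phi> (f d)) = (\<Sum>z\<in>f ` S. law S P f z * \<phi> z)"
proof -
  have "(\<Sum>d\<in>S. P d * \<phi> (f d)) = (\<Sum>z\<in>f ` S. \<Sum>d\<in>{d\<in>S. f d = z}. P d * \<phi> (f d))"
    using sum.image_gen[OF assms] by blast
  also have "\<dots> = (\<Sum>z\<in>f ` S. law S P f z * \<phi> z)"
    unfolding law_def by (intro sum.cong refl) (simp add: sum_distrib_right)
  finally show ?thesis .
qed

lemma sum_law_image:
  assumes "finite S"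
  shows "(\<Sum>z\<in>f ` S. law S P f z) = sum P S"
  using sum_mult_comp_eq_sum_law[OF assms, of P "\<lambda>_. 1" f] by simp

lemma sum_mult_comp_eq_sum_law_superset:
  assumes "finite S" "finite S'" "f ` S \<subseteq> S'"
  shows "(\<Sum>d\<in>S. P d * \<phi> (f d)) = (\<Sum>s\<in>S'. law S P f s * \<phi> s)"
proof -
  have "\<forall>s\<in>S' - f ` S. law S P f s * \<phi> s = 0"
    unfolding law_def by (auto intro!: sum.neutral)
  then show ?thesis
    unfolding sum_mult_comp_eq_sum_law[OF assms(1)] using assms
      by (intro sum.mono_neutral_left) auto
qed

lemma law_comp:
  assumes "finite S" "finite S'" "\<pi> ` S \<subseteq> S'"
  shows "law S P (\<lambda>d. \<psi> (\<pi> d)) z = (\<Sum>s\<in>{s\<in>S'. \<psi> s = z}. law S P \<pi> s)"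
proof -
  have "(\<Sum>s\<in>{s\<in>S'. \<psi> s = z}. sum P {d\<in>{d\<in>S. \<psi> (\<pi> d) = z}. \<pi> d = s}) = sum P {d\<in>S. \<psi> (\<pi> d) = z}"
    by (rule sum.group) (use assms in auto)
  moreover have "\<And>s. s \<in> {s\<in>S'. \<psi> s = z} \<Longrightarrow> {d\<in>{d\<in>S. \<psi> (\<pi> d) = z}. \<pi> d = s} = {d\<in>S. \<pi> d = s}"
    by auto
  ultimately show ?thesis unfolding law_def by simp
qed

lemma sum_law_pair_fst:
  assumes "finite S"
  shows "(\<Sum>a\<in>A ` S. law S P (\<lambda>d. (A d, C d)) (a, c)) = law S P C c"
proof -
  let ?T = "{d\<in>S. C d = c}"
  have "(\<Sum>a\<in>A ` S. law S P (\<lambda>d. (A d, C d)) (a, c)) = (\<Sum>a\<in>A ` S. law ?T P A a)"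
    unfolding law_def by (intro sum.cong refl arg_cong[where f="sum P"]) auto
  also have "\<dots> = (\<Sum>a\<in>A ` ?T. law ?T P A a)"
  proof (rule sum.mono_neutral_right)
    show "\<forall>a\<in>A ` S - A ` ?T. law ?T P A a = 0"
    proof
      fix a assume "a \<in> A ` S - A ` ?T"
      then have "\<forall>d\<in>?T. A d \<noteq> a" by blast
      then have empty: "{d\<in>?T. A d = a} = {}" by blast
      show "law ?T P A a = 0" unfolding law_def empty by simp
    qed
  qed (use assms in auto)
  also have "\<dots> = law S P C c"
    using sum_law_image[where S="?T" and f=A and P=P] assms unfolding law_def by simp
  finally show ?thesis .
qed

lemma ent_eq_sum_law: "ent S P f = - (\<Sum>z\<in>f ` S. law S P f z * log 2 (law S P f z))"
  unfolding ent_def law_def by simp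

lemma ent_eq_expectation:
  assumes "finite S"
  shows "ent S P f = - (\<Sum>d\<in>S. P d * log 2 (law S P f (f d)))"
  unfolding ent_eq_sum_law sum_mult_comp_eq_sum_law[OF assms, of P "\<lambda>z. log 2 (law S P f z)" f] ..

lemma ent_cong:
  assumes "finite S" "\<And>d d'. d \<in> S \<Longrightarrow> d' \<in> S \<Longrightarrow> f d = f d' \<longleftrightarrow> g d = g d'"
  shows "ent S P f = ent S P g"
proof -
  have "\<And>d. d \<in> S \<Longrightarrow> law S P f (f d) = law S P g (g d)"
    unfolding law_def using assms(2) by (intro sum.cong) auto
  then show ?thesis unfolding ent_eq_expectation[OF assms(1)] by (simp cong: sum.cong)
qed

lemma ent_const:
  assumes "finite S" "sum P S = 1"
  shows "ent S P (\<lambda>_. c) = 0"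
proof -
  have "S \<noteq> {}" using assms by auto
  then have "(\<lambda>_. c) ` S = {c}" by auto
  then show ?thesis unfolding ent_def using assms(2) by simp
qed

lemma ent_comp_law:
  assumes "finite S" "finite S'" "\<pi> ` S \<subseteq> S'" "\<And>s. s \<in> S' \<Longrightarrow> law S P \<pi> s = P' s"
    "\<And>d. d \<in> S \<Longrightarrow> g d = \<psi> (\<pi> d)"
  shows "ent S P g = ent S' P' \<psi>"
proof -
  have law_eq: "law S P (\<lambda>d. \<psi> (\<pi> d)) z = law S' P' \<psi> z" for z
    unfolding law_comp[OF assms(1-3)] law_def[of S' P' \<psi> z] using assms(4) by (intro sum.cong) auto
  have "ent S P g = ent S P (\<lambda>d. \<psi> (\<pi> d))"
    by (rule ent_cong[OF assms(1)]) (simp add: assms(5))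
  also have "\<dots> = - (\<Sum>s\<in>S'. law S P \<pi> s * log 2 (law S' P' \<psi> (\<psi> s)))"
    unfolding ent_eq_expectation[OF assms(1)] law_eq
    by (subst sum_mult_comp_eq_sum_law_superset[OF assms(1-3)]) (rule refl)
  also have "\<dots> = ent S' P' \<psi>"
    unfolding ent_eq_expectation[OF assms(2)] using assms(4) by simp
  finally show ?thesis .
qed

lemma gibbs_inequality:
  assumes "finite S" "\<forall>d\<in>S. 0 \<le> P d" "\<forall>d\<in>S. 0 < P d \<longrightarrow> 0 < R d"
    "(\<Sum>d\<in>S. P d * R d) \<le> sum P S"
  shows "(\<Sum>d\<in>S. P d * log 2 (R d)) \<le> 0"
proof -
  have "(\<Sum>d\<in>S. P d * log 2 (R d)) \<le> (\<Sum>d\<in>S. P d * (R d - 1) / ln 2)"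
  proof (intro sum_mono)
    fix d assume d: "d \<in> S"
    show "P d * log 2 (R d) \<le> P d * (R d - 1) / ln 2"
    proof (cases "P d = 0")
      case False
      then have "0 < P d" "0 < R d" using assms(2,3) d by force+
      moreover have "log 2 (R d) \<le> (R d - 1) / ln 2"
        using ln_le_minus_one[OF \<open>0 < R d\<close>] unfolding log_def by (simp add: divide_right_mono)
      ultimately have "P d * log 2 (R d) \<le> P d * ((R d - 1) / ln 2)" by (intro mult_left_mono) auto
      then show ?thesis by simp
    qed simp
  qed
  also have "\<dots> = ((\<Sum>d\<in>S. P d * R d) - sum P S) / ln 2"
    by (simp add: sum_divide_distrib[symmetric] sum_subtractf right_diff_distrib)
  also have "\<dots> \<le> 0" using assms(4) by (intro divide_nonpos_pos) auto
  finally show ?thesis .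
qed

definition cmi_ratio :: "'d set \<Rightarrow> ('d \<Rightarrow> real) \<Rightarrow> ('d \<Rightarrow> 'e) \<Rightarrow> ('d \<Rightarrow> 'f) \<Rightarrow> ('d \<Rightarrow> 'g) \<Rightarrow> 'd \<Rightarrow> real"
  where "cmi_ratio S P A B C d =
    law S P (\<lambda>d. (A d, C d)) (A d, C d) * law S P (\<lambda>d. (B d, C d)) (B d, C d)
      / (law S P (\<lambda>d. (A d, B d, C d)) (A d, B d, C d) * law S P C (C d))"

lemma cmi_ratio_pos:
  assumes "finite S" "\<forall>d\<in>S. 0 \<le> P d" "d \<in> S" "0 < P d"
  shows "0 < cmi_ratio S P A B C d"
  using law_pos[OF assms, of "\<lambda>d. (A d, C d)"] law_pos[OF assms, of "\<lambda>d. (B d, C d)"]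
    law_pos[OF assms, of "\<lambda>d. (A d, B d, C d)"] law_pos[OF assms, of C]
  unfolding cmi_ratio_def by (intro divide_pos_pos mult_pos_pos)

lemma cmi_eq_expectation:
  assumes "finite S" "\<forall>d\<in>S. 0 \<le> P d"
  shows "cmi S P A B C = - (\<Sum>d\<in>S. P d * log 2 (cmi_ratio S P A B C d))"
proof -
  have log_ratio: "P d * log 2 (cmi_ratio S P A B C d)
    = P d * log 2 (law S P (\<lambda>d. (A d, C d)) (A d, C d)) + P d * log 2 (law S P (\<lambda>d. (B d, C d)) (B d, C d))
      - P d * log 2 (law S P (\<lambda>d. (A d, B d, C d)) (A d, B d, C d)) - P d * log 2 (law S P C (C d))"
    if d: "d \<in> S" for d
  proof (cases "P d = 0")
    case False
    then have "0 < P d" using assms(2) d by force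
    note pos = law_pos[OF assms d this]
    show ?thesis
      using pos[of "\<lambda>d. (A d, C d)"] pos[of "\<lambda>d. (B d, C d)"] pos[of "\<lambda>d. (A d, B d, C d)"] pos[of C]
      by (simp add: cmi_ratio_def log_mult log_divide algebra_simps)
  qed simp
  show ?thesis
    unfolding cmi_def ent_eq_expectation[OF assms(1)]
    by (simp add: log_ratio sum.distrib sum_subtractf cong: sum.cong)
qed

text \<open>Summing \<open>p(a,b,c)\<close> times the ratio over the support gives at most
  \<open>\<Sum>\<^sub>c p(c)\<^sup>-\<^sup>1 \<Sum>\<^sub>a p(a,c) \<Sum>\<^sub>b p(b,c) = \<Sum>\<^sub>c p(c)\<close>.\<close>

lemma sum_cmi_ratio_le:
  assumes fin: "finite S" and nn: "\<forall>d\<in>S. 0 \<le> P d"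
  shows "(\<Sum>d\<in>S. P d * cmi_ratio S P A B C d) \<le> sum P S"
proof -
  define pAC where "pAC = law S P (\<lambda>d. (A d, C d))"
  define pBC where "pBC = law S P (\<lambda>d. (B d, C d))"
  define pABC where "pABC = law S P (\<lambda>d. (A d, B d, C d))"
  define pC where "pC = law S P C"
  define k where "k = (\<lambda>d. (A d, B d, C d))"
  define \<phi> where "\<phi> = (\<lambda>(a, b, c). pAC (a, c) * pBC (b, c) / (pABC (a, b, c) * pC c))"
  define \<psi> where "\<psi> = (\<lambda>(a, b, c). pAC (a, c) * pBC (b, c) / pC c)"
  have \<psi>_nonneg: "\<And>z. 0 \<le> \<psi> z"
    unfolding \<psi>_def pAC_def pBC_def pC_def
    by (auto simp: law_nonneg[OF nn] intro!: divide_nonneg_nonneg mult_nonneg_nonneg)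
  have "(\<Sum>d\<in>S. P d * cmi_ratio S P A B C d) = (\<Sum>z\<in>k ` S. pABC z * \<phi> z)"
    unfolding cmi_ratio_def pABC_def k_def
    using sum_mult_comp_eq_sum_law[OF fin, of P \<phi> k]
      by (simp add: \<phi>_def k_def pAC_def pBC_def pABC_def pC_def)
  also have "\<dots> \<le> (\<Sum>z\<in>k ` S. \<psi> z)"
  proof (intro sum_mono)
    fix z
    show "pABC z * \<phi> z \<le> \<psi> z"
    proof (cases "pABC z = 0")
      case True
      then show ?thesis using \<psi>_nonneg[of z] by simp
    next
      case False
      then show ?thesis by (cases z) (simp add: \<phi>_def \<psi>_def)
    qed
  qed
  also have "\<dots> \<le> (\<Sum>z\<in>A ` S \<times> B ` S \<times> C ` S. \<psi> z)"
    using fin \<psi>_nonneg by (intro sum_mono2) (auto simp: k_def)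
  also have "\<dots> = (\<Sum>a\<in>A ` S. \<Sum>b\<in>B ` S. \<Sum>c\<in>C ` S. \<psi> (a, b, c))"
    by (simp add: sum.cartesian_product)
  also have "\<dots> = (\<Sum>a\<in>A ` S. \<Sum>c\<in>C ` S. \<Sum>b\<in>B ` S. \<psi> (a, b, c))"
    by (rule sum.cong[OF refl sum.swap])
  also have "\<dots> = (\<Sum>c\<in>C ` S. \<Sum>a\<in>A ` S. \<Sum>b\<in>B ` S. pAC (a, c) * pBC (b, c) / pC c)"
    unfolding \<psi>_def case_prod_conv by (rule sum.swap)
  also have "\<dots> = (\<Sum>c\<in>C ` S. (\<Sum>a\<in>A ` S. pAC (a, c)) * (\<Sum>b\<in>B ` S. pBC (b, c)) / pC c)"
    by (simp add: sum_product sum_divide_distrib)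
  also have "\<dots> = (\<Sum>c\<in>C ` S. pC c * pC c / pC c)"
    unfolding pAC_def pBC_def pC_def by (simp add: sum_law_pair_fst[OF fin])
  also have "\<dots> \<le> (\<Sum>c\<in>C ` S. pC c)"
    by (intro sum_mono) (simp add: pC_def law_nonneg[OF nn])
  also have "\<dots> = sum P S" unfolding pC_def by (rule sum_law_image[OF fin])
  finally show ?thesis .
qed

lemma cmi_nonneg:
  assumes "pmf_on S P"
  shows "0 \<le> cmi S P A B C"
proof -
  have fin: "finite S" and nn: "\<forall>d\<in>S. 0 \<le> P d" using assms unfolding pmf_on_def by auto
  have "(\<Sum>d\<in>S. P d * log 2 (cmi_ratio S P A B C d)) \<le> 0"
    using cmi_ratio_pos[OF fin nn] sum_cmi_ratio_le[OF fin nn]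
      by (intro gibbs_inequality[OF fin nn]) auto
  then show ?thesis unfolding cmi_eq_expectation[OF fin nn] by simp
qed

lemma cond_ent_cong:
  assumes "finite S"
    "\<And>d d'. d \<in> S \<Longrightarrow> d' \<in> S \<Longrightarrow> A d = A d' \<longleftrightarrow> A' d = A' d'"
    "\<And>d d'. d \<in> S \<Longrightarrow> d' \<in> S \<Longrightarrow> C d = C d' \<longleftrightarrow> C' d = C' d'"
  shows "cond_ent S P A C = cond_ent S P A' C'"
proof -
  have "ent S P (\<lambda>d. (A d, C d)) = ent S P (\<lambda>d. (A' d, C' d))"
  proof (rule ent_cong[OF assms(1)])
    fix d d' assume "d \<in> S" "d' \<in> S"
    then show "(A d, C d) = (A d', C d') \<longleftrightarrow> (A' d, C' d) = (A' d', C' d')"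
      using assms(2,3)[of d d'] by simp
  qed
  moreover have "ent S P C = ent S P C'"
    by (rule ent_cong[OF assms(1)]) (rule assms(3))
  ultimately show ?thesis unfolding cond_ent_def by simp
qed

lemma cmi_eq_cond_ent_diff:
  assumes "finite S"
  shows "cmi S P A B C = cond_ent S P B C - cond_ent S P B (\<lambda>d. (A d, C d))"
proof -
  have "ent S P (\<lambda>d. (A d, B d, C d)) = ent S P (\<lambda>d. (B d, A d, C d))"
    by (rule ent_cong[OF assms]) auto
  then show ?thesis unfolding cmi_def cond_ent_def by simp
qed

lemma cond_ent_pair_le:
  assumes "pmf_on S P"
  shows "cond_ent S P A (\<lambda>d. (B d, C d)) \<le> cond_ent S P A C"
proof -
  have "finite S" using assms unfolding pmf_on_def by auto
  then show ?thesis
    using cmi_nonneg[OF assms, of B A C] unfolding cmi_eq_cond_ent_diff[OF \<open>finite S\<close>] by simp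
qed

lemma cond_ent_le_if_determines:
  assumes "pmf_on S P" "\<And>d d'. d \<in> S \<Longrightarrow> d' \<in> S \<Longrightarrow> F d = F d' \<Longrightarrow> G d = G d'"
  shows "cond_ent S P A F \<le> cond_ent S P A G"
proof -
  have "finite S" using assms unfolding pmf_on_def by auto
  then have "cond_ent S P A F = cond_ent S P A (\<lambda>d. (F d, G d))"
  proof (rule cond_ent_cong)
    fix d d' assume "d \<in> S" "d' \<in> S"
    then show "F d = F d' \<longleftrightarrow> (F d, G d) = (F d', G d')" using assms(2)[of d d'] by auto
  qed simp
  also have "\<dots> \<le> cond_ent S P A G" by (rule cond_ent_pair_le[OF assms(1)])
  finally show ?thesis .
qed

lemma cond_ent_chain:
  assumes "finite S"
  shows "cond_ent S P (\<lambda>d. (X d, Y d)) G = cond_ent S P X G + cond_ent S P Y (\<lambda>d. (X d, G d))"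
proof -
  have "ent S P (\<lambda>d. ((X d, Y d), G d)) = ent S P (\<lambda>d. (Y d, X d, G d))"
    by (rule ent_cong[OF assms]) auto
  then show ?thesis unfolding cond_ent_def by simp
qed

lemma cond_ent_const:
  assumes "finite S"
  shows "cond_ent S P (\<lambda>_. c) G = 0"
proof -
  have "ent S P (\<lambda>d. (c, G d)) = ent S P G" by (rule ent_cong[OF assms]) auto
  then show ?thesis unfolding cond_ent_def by simp
qed

lemma cond_ent_restrict_le_sum:
  fixes f :: "nat \<Rightarrow> 'd \<Rightarrow> 'e" and g :: "nat \<Rightarrow> 'd \<Rightarrow> 'f"
  assumes "pmf_on S P"
    "\<And>t d d'. t < n \<Longrightarrow> d \<in> S \<Longrightarrow> d' \<in> S \<Longrightarrow> G d = G d' \<Longrightarrow> g t d = g t d'"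
  shows "cond_ent S P (\<lambda>d. \<lambda>t\<in>{..<n}. f t d) G \<le> (\<Sum>t<n. cond_ent S P (f t) (g t))"
  using assms(2)
proof (induction n)
  case 0
  have "finite S" using assms unfolding pmf_on_def by auto
  then show ?case using cond_ent_const[of S P "\<lambda>t::nat. undefined :: 'e" G] by simp
next
  case (Suc n)
  have fin: "finite S" using assms unfolding pmf_on_def by auto
  have restrict_Suc: "(\<lambda>t\<in>{..<Suc n}. f t d) = (\<lambda>t\<in>{..<Suc n}. f t d') \<longleftrightarrow>
      ((\<lambda>t\<in>{..<n}. f t d), f n d) = ((\<lambda>t\<in>{..<n}. f t d'), f n d')" for d d'
    by (auto simp: fun_eq_iff less_Suc_eq split: if_splits)
  have "cond_ent S P (\<lambda>d. \<lambda>t\<in>{..<Suc n}. f t d) G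
      = cond_ent S P (\<lambda>d. ((\<lambda>t\<in>{..<n}. f t d), f n d)) G"
    by (rule cond_ent_cong[OF fin]) (simp_all only: restrict_Suc)
  also have "\<dots> = cond_ent S P (\<lambda>d. \<lambda>t\<in>{..<n}. f t d) G
      + cond_ent S P (f n) (\<lambda>d. ((\<lambda>t\<in>{..<n}. f t d), G d))"
    by (rule cond_ent_chain[OF fin])
  also have "\<dots> \<le> (\<Sum>t<n. cond_ent S P (f t) (g t)) + cond_ent S P (f n) (g n)"
  proof (rule add_mono)
    show "cond_ent S P (\<lambda>d. \<lambda>t\<in>{..<n}. f t d) G \<le> (\<Sum>t<n. cond_ent S P (f t) (g t))"
      by (rule Suc.IH) (rule Suc.prems, simp_all)
    have "cond_ent S P (f n) (\<lambda>d. ((\<lambda>t\<in>{..<n}. f t d), G d)) \<le> cond_ent S P (f n) G"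
      by (rule cond_ent_pair_le[OF assms(1)])
    also have "\<dots> \<le> cond_ent S P (f n) (g n)"
      by (rule cond_ent_le_if_determines[OF assms(1)]) (rule Suc.prems, simp_all)
    finally show "cond_ent S P (f n) (\<lambda>d. ((\<lambda>t\<in>{..<n}. f t d), G d)) \<le> cond_ent S P (f n) (g n)" .
  qed
  finally show ?case unfolding sum.lessThan_Suc .
qed

lemma cond_ent_kernel:
  assumes "finite S" "\<forall>d\<in>S. 0 \<le> P d"
    "\<And>d. d \<in> S \<Longrightarrow> 0 < P d \<Longrightarrow> 0 < K d \<and> law S P (\<lambda>d. (G d, F d)) (G d, F d) = law S P F (F d) * K d"
  shows "cond_ent S P G F = - (\<Sum>d\<in>S. P d * log 2 (K d))"
proof -
  have "P d * log 2 (law S P (\<lambda>d. (G d, F d)) (G d, F d)) - P d * log 2 (law S P F (F d))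
      = P d * log 2 (K d)" if d: "d \<in> S" for d
  proof (cases "P d = 0")
    case False
    then have "0 < P d" using assms(2) d by force
    with assms(3)[OF d] law_pos[OF assms(1,2) d this, of F] show ?thesis
      by (simp add: log_mult algebra_simps)
  qed simp
  then have "(\<Sum>d\<in>S. P d * log 2 (law S P (\<lambda>d. (G d, F d)) (G d, F d)))
      - (\<Sum>d\<in>S. P d * log 2 (law S P F (F d))) = (\<Sum>d\<in>S. P d * log 2 (K d))"
    by (simp add: sum_subtractf[symmetric])
  then show ?thesis
    unfolding cond_ent_def ent_eq_expectation[OF assms(1)] by linarith
qed

lemma cmi_commute:
  assumes "finite S"
  shows "cmi S P A B C = cmi S P B A C"
proof -
  have "ent S P (\<lambda>d. (A d, B d, C d)) = ent S P (\<lambda>d. (B d, A d, C d))"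
    by (rule ent_cong[OF assms]) auto
  then show ?thesis unfolding cmi_def by simp
qed

lemma ent_pair_le_add:
  assumes "pmf_on S P"
  shows "ent S P (\<lambda>d. (A d, B d)) \<le> ent S P A + ent S P B"
proof -
  have fin: "finite S" and tot: "sum P S = 1" using assms unfolding pmf_on_def by auto
  have "ent S P (\<lambda>d. (A d, ())) = ent S P A" "ent S P (\<lambda>d. (B d, ())) = ent S P B"
    "ent S P (\<lambda>d. (A d, B d, ())) = ent S P (\<lambda>d. (A d, B d))"
    by (rule ent_cong[OF fin]; simp)+
  then show ?thesis
    using cmi_nonneg[OF assms, of A B "\<lambda>_. ()"] ent_const[OF fin tot, of "()"] unfolding cmi_def
      by simp
qed

lemma cond_ent_eq_if_markov:
  assumes "finite S" "cmi S P W Y (\<lambda>d. v (W d)) = 0"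
  shows "cond_ent S P Y (\<lambda>d. v (W d)) = cond_ent S P Y W"
proof -
  have "cond_ent S P Y (\<lambda>d. (W d, v (W d))) = cond_ent S P Y W"
    by (rule cond_ent_cong[OF assms(1)]) auto
  then show ?thesis using assms(2) unfolding cmi_eq_cond_ent_diff[OF assms(1)] by simp
qed

text \<open>\<open>H(W) \<le> H(g(W)) + H(W|Y) + I(W;Y|g(W))\<close>, with the mutual information written as a
  difference of conditional entropies.\<close>

lemma ent_le_ent_comp_add_cond_ent:
  assumes "pmf_on S P"
  shows "ent S P W \<le> ent S P (\<lambda>d. g (W d)) + cond_ent S P W Y
    + cond_ent S P Y (\<lambda>d. g (W d)) - cond_ent S P Y W"
proof -
  have fin: "finite S" using assms unfolding pmf_on_def by auto
  let ?G = "\<lambda>d. g (W d)"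
  have "ent S P W = ent S P (\<lambda>d. (W d, ?G d))" by (rule ent_cong[OF fin]) auto
  then have split: "ent S P W = ent S P ?G + cond_ent S P W ?G" unfolding cond_ent_def by simp
  have "cond_ent S P Y (\<lambda>d. (W d, ?G d)) = cond_ent S P Y W"
    by (rule cond_ent_cong[OF fin]) auto
  then have cmi_Y: "cmi S P W Y ?G = cond_ent S P Y ?G - cond_ent S P Y W"
    unfolding cmi_eq_cond_ent_diff[OF fin] by simp
  have cmi_W: "cmi S P W Y ?G = cond_ent S P W ?G - cond_ent S P W (\<lambda>d. (Y d, ?G d))"
    using cmi_commute[OF fin, of P W Y ?G] cmi_eq_cond_ent_diff[OF fin, of P Y W ?G] by simp
  have "cond_ent S P W (\<lambda>d. (Y d, ?G d)) \<le> cond_ent S P W Y"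
    by (rule cond_ent_le_if_determines[OF assms]) simp
  with split cmi_Y cmi_W show ?thesis by linarith
qed

lemma ent_le_ent_add_cond_ent_if_markov:
  assumes "pmf_on S P" "cmi S P W Y (\<lambda>d. v (W d)) = 0"
  shows "ent S P W \<le> ent S P (\<lambda>d. v (W d)) + cond_ent S P W Y"
  using ent_le_ent_comp_add_cond_ent[OF assms(1), of W v Y] cond_ent_eq_if_markov[OF _ assms(2)] assms(1)
  unfolding pmf_on_def by simp

text \<open>Add \<open>H(W) \<le> H(V) + H(W|Y)\<close> to \<open>H(W) \<le> H(W|Y) + I(W;Y,U)\<close> for \<open>V = (f\<^sub>1(W), f\<^sub>2(W))\<close>,
  and split \<open>H(V) + I(V;U)\<close> using \<open>I(f\<^sub>1(W);f\<^sub>2(W)|U) \<ge> 0\<close>.\<close>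

lemma two_ent_le_markov_pair:
  assumes "pmf_on S P"
    and markov_Y: "cmi S P W Y (\<lambda>d. (f1 (W d), f2 (W d))) = 0"
    and markov_U: "cmi S P W U (\<lambda>d. (f1 (W d), f2 (W d))) = 0"
  shows "2 * ent S P W \<le> ent S P (\<lambda>d. f1 (W d)) + ent S P (\<lambda>d. f2 (W d)) + 2 * cond_ent S P W Y
    + (cond_ent S P Y U - cond_ent S P (\<lambda>d. (Y d, U d)) W + cond_ent S P U W)
    + (cond_ent S P U (\<lambda>d. f1 (W d)) - cond_ent S P U W)
    + (cond_ent S P U (\<lambda>d. f2 (W d)) - cond_ent S P U W)"
proof -
  have fin: "finite S" using assms unfolding pmf_on_def by auto
  let ?V1 = "\<lambda>d. f1 (W d)" and ?V2 = "\<lambda>d. f2 (W d)" and ?V = "\<lambda>d. (f1 (W d), f2 (W d))"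
  have via_V: "ent S P W \<le> ent S P ?V + cond_ent S P W Y"
    using ent_le_ent_add_cond_ent_if_markov[OF assms(1), of W Y "\<lambda>w. (f1 w, f2 w)"] markov_Y by simp
  have U_given_V: "cond_ent S P U ?V = cond_ent S P U W"
    using cond_ent_eq_if_markov[OF fin, of P W U "\<lambda>w. (f1 w, f2 w)"] markov_U by simp
  have "cond_ent S P W (\<lambda>d. (U d, Y d)) \<le> cond_ent S P W Y"
    by (rule cond_ent_pair_le[OF assms(1)])
  moreover have "ent S P (\<lambda>d. (W d, U d, Y d)) = ent S P (\<lambda>d. ((Y d, U d), W d))"
    "ent S P (\<lambda>d. (U d, Y d)) = ent S P (\<lambda>d. (Y d, U d))"
    by (rule ent_cong[OF fin]; auto)+
  ultimately have via_YU: "ent S P W \<le> cond_ent S P W Y + ent S P U + cond_ent S P Y U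
      - cond_ent S P (\<lambda>d. (Y d, U d)) W"
    unfolding cond_ent_def by linarith
  have "0 \<le> cmi S P ?V1 ?V2 U" by (rule cmi_nonneg[OF assms(1)])
  moreover have "ent S P (\<lambda>d. (f1 (W d), f2 (W d), U d)) = ent S P (\<lambda>d. (U d, ?V d))"
    "ent S P (\<lambda>d. (f1 (W d), U d)) = ent S P (\<lambda>d. (U d, f1 (W d)))"
    "ent S P (\<lambda>d. (f2 (W d), U d)) = ent S P (\<lambda>d. (U d, f2 (W d)))"
    by (rule ent_cong[OF fin]; auto)+
  ultimately have "ent S P ?V + ent S P U + cond_ent S P U ?V
      \<le> ent S P ?V1 + ent S P ?V2 + cond_ent S P U ?V1 + cond_ent S P U ?V2"
    unfolding cmi_def cond_ent_def by linarith
  with via_V via_YU U_given_V show ?thesis by linarith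
qed

text \<open>Given \<open>A\<close> or only \<open>V(A)\<close>, the law of \<open>\<phi>(B)\<close> is the same kernel \<open>\<kappa>\<close>.\<close>

lemma cmi_kernel_markov:
  fixes p :: "'a \<Rightarrow> real" and K :: "'v \<Rightarrow> 'b \<Rightarrow> real"
  assumes "finite A" "finite B" "\<forall>a\<in>A. 0 \<le> p a" "\<And>v b. 0 \<le> K v b" "\<And>v. sum (K v) B = 1"
  shows "cmi (A \<times> B) (\<lambda>(a, b). p a * K (V a) b) fst (\<lambda>d. \<phi> (snd d)) (\<lambda>d. V (fst d)) = 0"
proof -
  let ?S = "A \<times> B" and ?P = "\<lambda>(a, b). p a * K (V a) b"
  define \<kappa> where "\<kappa> v z = (\<Sum>b\<in>{b\<in>B. \<phi> b = z}. K v b)" for v z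
  have fin: "finite ?S" using assms(1,2) by simp
  have nn: "\<forall>d\<in>?S. 0 \<le> ?P d" using assms(3,4) by auto
  have rect: "sum ?P (A' \<times> B') = sum p A' * sum (K v) B'" if "\<forall>a\<in>A'. V a = v" for A' B' v
    using that by (simp add: sum.cartesian_product' sum_product)
  have pos: "0 < \<kappa> (V a) (\<phi> b)" if "(a, b) \<in> ?S" "0 < ?P (a, b)" for a b
  proof -
    have "0 < K (V a) b" using that assms(3) assms(4)[of "V a" b] by (auto simp: zero_less_mult_iff)
    then show ?thesis unfolding \<kappa>_def using that assms(2,4) by (intro sum_pos2[of _ b]) auto
  qed
  have "{d\<in>?S. (\<phi> (snd d), fst d) = (\<phi> b, a)} = {a} \<times> {b'\<in>B. \<phi> b' = \<phi> b}"
    "{d\<in>?S. fst d = a} = {a} \<times> B" if "a \<in> A" for a b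
    using that by auto
  then have given_A: "law ?S ?P (\<lambda>d. (\<phi> (snd d), fst d)) (\<phi> b, a) = law ?S ?P fst a * \<kappa> (V a) (\<phi> b)"
    if "a \<in> A" for a b
    using that unfolding law_def by (simp add: rect[of "{a}" "V a"] \<kappa>_def assms(5))
  have "{d\<in>?S. (\<phi> (snd d), V (fst d)) = (\<phi> b, V a)} = {a'\<in>A. V a' = V a} \<times> {b'\<in>B. \<phi> b' = \<phi> b}"
    "{d\<in>?S. V (fst d) = V a} = {a'\<in>A. V a' = V a} \<times> B" for a b
    by auto
  then have given_V: "law ?S ?P (\<lambda>d. (\<phi> (snd d), V (fst d))) (\<phi> b, V a)
      = law ?S ?P (\<lambda>d. V (fst d)) (V a) * \<kappa> (V a) (\<phi> b)" for a b
    unfolding law_def by (simp add: rect[of "{a'\<in>A. V a' = V a}" "V a"] \<kappa>_def assms(5))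
  have "cond_ent ?S ?P (\<lambda>d. \<phi> (snd d)) fst = - (\<Sum>d\<in>?S. ?P d * log 2 (\<kappa> (V (fst d)) (\<phi> (snd d))))"
    by (rule cond_ent_kernel[OF fin nn]) (auto simp: pos given_A)
  moreover have "cond_ent ?S ?P (\<lambda>d. \<phi> (snd d)) (\<lambda>d. V (fst d))
      = - (\<Sum>d\<in>?S. ?P d * log 2 (\<kappa> (V (fst d)) (\<phi> (snd d))))"
    by (rule cond_ent_kernel[OF fin nn]) (auto simp: pos given_V)
  moreover have "cond_ent ?S ?P (\<lambda>d. \<phi> (snd d)) (\<lambda>d. (fst d, V (fst d)))
      = cond_ent ?S ?P (\<lambda>d. \<phi> (snd d)) fst"
    by (rule cond_ent_cong[OF fin]) auto
  ultimately show ?thesis unfolding cmi_eq_cond_ent_diff[OF fin] by simp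
qed

section \<open>Fano's inequality and time sharing\<close>

lemma sum_guess_le_one:
  fixes M :: nat and a :: real
  assumes "0 < M" "0 < a" "a < 1"
  shows "(\<Sum>w<M. if c = w then 1 - a else a / M) \<le> 1"
proof -
  have "(\<Sum>w<M. if c = w then 1 - a else a / M) = (\<Sum>w<M. a / M + (if c = w then 1 - a - a / M else 0))"
    by (intro sum.cong) auto
  also have "\<dots> = a + (if c < M then 1 - a - a / M else 0)"
    using assms(1) by (simp add: sum.distrib)
  also have "\<dots> \<le> 1" using assms by (auto simp: field_simps)
  finally show ?thesis .
qed

lemma sum_guess_ratio_le:
  assumes fin: "finite S" and nn: "\<forall>d\<in>S. 0 \<le> P d"
    and "finite A" "\<forall>d\<in>S. X d \<in> A" "\<And>x y. 0 < T x y" "\<And>y. (\<Sum>x\<in>A. T x y) \<le> 1"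
  shows "(\<Sum>d\<in>S. P d * (T (X d) (Y d) * law S P Y (Y d) / law S P (\<lambda>d. (X d, Y d)) (X d, Y d)))
    \<le> sum P S"
proof -
  define pXY where "pXY = law S P (\<lambda>d. (X d, Y d))"
  define pY where "pY = law S P Y"
  define \<phi> where "\<phi> = (\<lambda>(x, y). T x y * pY y / pXY (x, y))"
  have "(\<Sum>d\<in>S. P d * (T (X d) (Y d) * law S P Y (Y d) / law S P (\<lambda>d. (X d, Y d)) (X d, Y d)))
      = (\<Sum>z\<in>(\<lambda>d. (X d, Y d)) ` S. pXY z * \<phi> z)"
    using sum_mult_comp_eq_sum_law[OF fin, of P \<phi> "\<lambda>d. (X d, Y d)"]
      by (simp add: \<phi>_def pY_def pXY_def)
  also have "\<dots> \<le> (\<Sum>z\<in>(\<lambda>d. (X d, Y d)) ` S. T (fst z) (snd z) * pY (snd z))"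
  proof (intro sum_mono)
    fix z :: "_ \<times> _"
    show "pXY z * \<phi> z \<le> T (fst z) (snd z) * pY (snd z)"
      using assms(5)[of "fst z" "snd z"] law_nonneg[OF nn, of Y "snd z"]
      by (cases "pXY z = 0") (auto simp: \<phi>_def pY_def split: prod.splits)
  qed
  also have "\<dots> \<le> (\<Sum>z\<in>A \<times> Y ` S. T (fst z) (snd z) * pY (snd z))"
    using fin assms(3,4) law_nonneg[OF nn]
    by (intro sum_mono2) (auto simp: pY_def intro!: mult_nonneg_nonneg less_imp_le[OF assms(5)])
  also have "\<dots> = (\<Sum>x\<in>A. \<Sum>y\<in>Y ` S. T x y * pY y)"
    by (simp add: sum.cartesian_product')
  also have "\<dots> = (\<Sum>y\<in>Y ` S. pY y * (\<Sum>x\<in>A. T x y))"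
    by (subst sum.swap) (simp add: sum_distrib_left mult.commute)
  also have "\<dots> \<le> (\<Sum>y\<in>Y ` S. pY y)"
    using assms(6) law_nonneg[OF nn] by (intro sum_mono mult_left_le) (simp_all add: pY_def)
  also have "\<dots> = sum P S" unfolding pY_def by (rule sum_law_image[OF fin])
  finally show ?thesis .
qed

text \<open>\<open>T\<close> is a sub-stochastic guess of \<open>X\<close> from \<open>Y\<close>; Fano's inequality below is the case of the
  guess that trusts the decoder with probability \<open>1 - a\<close>.\<close>

lemma cond_ent_le_cross_ent:
  assumes "pmf_on S P" "finite A" "\<forall>d\<in>S. X d \<in> A" "\<And>x y. 0 < T x y" "\<And>y. (\<Sum>x\<in>A. T x y) \<le> 1"
  shows "cond_ent S P X Y \<le> - (\<Sum>d\<in>S. P d * log 2 (T (X d) (Y d)))"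
proof -
  have fin: "finite S" and nn: "\<forall>d\<in>S. 0 \<le> P d" using assms unfolding pmf_on_def by auto
  let ?pY = "law S P Y" and ?pXY = "law S P (\<lambda>d. (X d, Y d))"
  let ?\<phi> = "\<lambda>d. T (X d) (Y d) * ?pY (Y d) / ?pXY (X d, Y d)"
  have "\<forall>d\<in>S. 0 < P d \<longrightarrow> 0 < ?\<phi> d"
    using law_pos[OF fin nn, of _ Y] law_pos[OF fin nn, of _ "\<lambda>d. (X d, Y d)"] assms(4)
    by (auto intro!: divide_pos_pos mult_pos_pos)
  then have "(\<Sum>d\<in>S. P d * log 2 (?\<phi> d)) \<le> 0"
    using sum_guess_ratio_le[OF fin nn assms(2-5)] by (intro gibbs_inequality[OF fin nn]) auto
  moreover have "P d * log 2 (?\<phi> d)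
      = P d * log 2 (T (X d) (Y d)) + P d * log 2 (?pY (Y d)) - P d * log 2 (?pXY (X d, Y d))"
    if "d \<in> S" for d
  proof (cases "P d = 0")
    case False
    then have "0 < P d" using nn that by force
    then show ?thesis
      using law_pos[OF fin nn that \<open>0 < P d\<close>, of Y] law_pos[OF fin nn that \<open>0 < P d\<close>, of "\<lambda>d. (X d, Y d)"]
        assms(4)[of "X d" "Y d"]
      by (simp add: log_mult log_divide algebra_simps)
  qed simp
  ultimately show ?thesis
    unfolding cond_ent_def ent_eq_expectation[OF fin] by (simp add: sum.distrib sum_subtractf)
qed

lemma fano_inequality:
  fixes X :: "'d \<Rightarrow> nat" and M :: nat and a :: real
  assumes "pmf_on S P" "\<forall>d\<in>S. X d < M" "0 < a" "a < 1"
  shows "cond_ent S P X Y \<le> - log 2 (1 - a)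
    + (\<Sum>d\<in>S. P d * (if dec (Y d) \<noteq> X d then 1 else 0)) * (log 2 M - log 2 a)"
proof -
  have fin: "finite S" and nn: "\<forall>d\<in>S. 0 \<le> P d" and tot: "sum P S = 1"
    using assms unfolding pmf_on_def by auto
  obtain d0 where "d0 \<in> S" using tot by fastforce
  then have "0 < M" using assms(2) by force
  define T where "T = (\<lambda>x y. if dec y = x then 1 - a else a / real M)"
  define Pe where "Pe = (\<Sum>d\<in>S. P d * (if dec (Y d) \<noteq> X d then 1 else 0))"
  have "cond_ent S P X Y \<le> - (\<Sum>d\<in>S. P d * log 2 (T (X d) (Y d)))"
  proof (rule cond_ent_le_cross_ent[OF assms(1) finite_lessThan])
    show "\<forall>d\<in>S. X d \<in> {..<M}" using assms(2) by simp
    show "0 < T x y" for x y using assms(3,4) \<open>0 < M\<close> by (simp add: T_def)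
    show "(\<Sum>x<M. T x y) \<le> 1" for y
      unfolding T_def using sum_guess_le_one[OF \<open>0 < M\<close> assms(3,4), of "dec y"] by simp
  qed
  also have "(\<Sum>d\<in>S. P d * log 2 (T (X d) (Y d)))
      = (\<Sum>d\<in>S. P d * log 2 (1 - a)
          + P d * (if dec (Y d) \<noteq> X d then 1 else 0) * (log 2 (a / M) - log 2 (1 - a)))"
    unfolding T_def by (intro sum.cong) (auto simp: algebra_simps)
  also have "\<dots> = log 2 (1 - a) + Pe * (log 2 (a / M) - log 2 (1 - a))"
    unfolding Pe_def sum.distrib using tot
    by (simp add: sum_distrib_right[symmetric] sum_distrib_left[symmetric] mult.commute)
  also have "log 2 (a / M) = log 2 a - log 2 M" using assms(3) \<open>0 < M\<close> by (simp add: log_divide)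
  finally have "cond_ent S P X Y \<le> - log 2 (1 - a) + Pe * (log 2 M - log 2 a) + Pe * log 2 (1 - a)"
    by (simp add: algebra_simps)
  moreover have "0 \<le> Pe" unfolding Pe_def using nn by (intro sum_nonneg) auto
  then have "Pe * log 2 (1 - a) \<le> 0" using assms(3,4) by (simp add: mult_nonneg_nonpos)
  ultimately show ?thesis unfolding Pe_def by linarith
qed

text \<open>Time sharing: a uniformly distributed time index \<open>t < n\<close> is adjoined to the sample space.\<close>

lemma pmf_on_time_sharing:
  fixes n :: nat
  assumes "pmf_on S P" "0 < n"
  shows "pmf_on (S \<times> {..<n}) (\<lambda>(s, t). P s / n)"
proof -
  have "sum (\<lambda>(s, t). P s / n) (S \<times> {..<n}) = (\<Sum>s\<in>S. \<Sum>t<n. P s / n)"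
    by (simp only: sum.cartesian_product)
  also have "\<dots> = 1" using assms unfolding pmf_on_def by (simp add: sum_divide_distrib[symmetric])
  finally show ?thesis using assms unfolding pmf_on_def by auto
qed

lemma ent_time_sharing:
  fixes n :: nat
  assumes "pmf_on S P" "0 < n"
  shows "ent (S \<times> {..<n}) (\<lambda>(s, t). P s / n) (\<lambda>(s, t). (f t s, t))
    = log 2 n + (\<Sum>t<n. ent S P (f t)) / n"
proof -
  have fin: "finite S" and nn: "\<forall>d\<in>S. 0 \<le> P d" and tot: "sum P S = 1"
    using assms unfolding pmf_on_def by auto
  let ?S = "S \<times> {..<n}" and ?P = "\<lambda>(s, t). P s / real n" and ?f = "\<lambda>(s, t). (f t s, t)"
  have law_eq: "law ?S ?P ?f (f t s, t) = law S P (f t) (f t s) / n" if "t < n" for s t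
  proof -
    have "{d\<in>?S. ?f d = (f t s, t)} = {s'\<in>S. f t s' = f t s} \<times> {t}" using that by auto
    then show ?thesis unfolding law_def by (simp add: sum.cartesian_product' sum_divide_distrib)
  qed
  have log_eq: "P s / n * log 2 (law S P (f t) (f t s) / n)
      = (P s * log 2 (law S P (f t) (f t s)) - P s * log 2 n) / n" if "s \<in> S" for s t
  proof (cases "P s = 0")
    case False
    then have "0 < P s" using nn that by force
    with law_pos[OF fin nn that this, of "f t"] assms(2) show ?thesis
      by (simp add: log_divide diff_divide_distrib right_diff_distrib)
  qed simp
  have "ent ?S ?P ?f = - (\<Sum>(s, t)\<in>?S. P s / n * log 2 (law S P (f t) (f t s) / n))"
    unfolding ent_eq_expectation[OF finite_cartesian_product[OF fin finite_lessThan]]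
    by (intro arg_cong[where f=uminus] sum.cong refl) (clarsimp simp: law_eq)
  also have "\<dots> = - (\<Sum>s\<in>S. \<Sum>t<n. (P s * log 2 (law S P (f t) (f t s)) - P s * log 2 n) / n)"
    unfolding sum.cartesian_product'
  proof (intro arg_cong[where f=uminus] sum.cong refl)
    fix s t assume "s \<in> S"
    then show "(case (s, t) of (s, t) \<Rightarrow> P s / n * log 2 (law S P (f t) (f t s) / n))
        = (P s * log 2 (law S P (f t) (f t s)) - P s * log 2 n) / n"
      using log_eq by simp
  qed
  also have "\<dots> = - (\<Sum>t<n. \<Sum>s\<in>S. (P s * log 2 (law S P (f t) (f t s)) - P s * log 2 n) / n)"
    by (subst sum.swap) (rule refl)
  also have "\<dots> = log 2 n * sum P S + (\<Sum>t<n. - (\<Sum>s\<in>S. P s * log 2 (law S P (f t) (f t s)))) / n"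
    using assms(2)
    by (simp add: sum_subtractf diff_divide_distrib sum_divide_distrib[symmetric] sum_negf
        sum_distrib_left[symmetric] sum_distrib_right[symmetric] algebra_simps)
  finally show ?thesis using tot by (simp add: ent_eq_expectation[OF fin])
qed

lemma cond_ent_time_sharing:
  fixes n :: nat
  assumes "pmf_on S P" "0 < n"
  shows "cond_ent (S \<times> {..<n}) (\<lambda>(s, t). P s / n) (\<lambda>(s, t). a t s) (\<lambda>(s, t). (b t s, t))
    = (\<Sum>t<n. cond_ent S P (a t) (b t)) / n"
proof -
  have fin: "finite S" using assms unfolding pmf_on_def by auto
  have "ent (S \<times> {..<n}) (\<lambda>(s, t). P s / n) (\<lambda>d. ((\<lambda>(s, t). a t s) d, (\<lambda>(s, t). (b t s, t)) d))
     = ent (S \<times> {..<n}) (\<lambda>(s, t). P s / n) (\<lambda>(s, t). ((a t s, b t s), t))"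
    by (rule ent_cong) (use fin in auto)
  then show ?thesis
    unfolding cond_ent_def ent_time_sharing[OF assms, of "\<lambda>t s. (a t s, b t s)"] ent_time_sharing[OF assms, of b]
    by (simp add: sum_subtractf diff_divide_distrib)
qed

lemma sum_expectation_time_sharing:
  fixes \<pi> :: "nat \<Rightarrow> 'd \<Rightarrow> 's"
  assumes "pmf_on S P" "0 < n" "finite S'" "\<And>t. t < n \<Longrightarrow> \<pi> t ` S \<subseteq> S'"
    "\<And>s. s \<in> S' \<Longrightarrow> law (S \<times> {..<n}) (\<lambda>(d, t). P d / n) (\<lambda>(d, t). \<pi> t d) s = P' s"
  shows "(\<Sum>t<n. \<Sum>d\<in>S. P d * \<phi> (\<pi> t d)) = real n * (\<Sum>s\<in>S'. P' s * \<phi> s)"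
proof -
  have fin: "finite S" using assms unfolding pmf_on_def by auto
  let ?S = "S \<times> {..<n}" and ?P = "\<lambda>(d, t). P d / real n"
  have "(\<Sum>t<n. \<Sum>d\<in>S. P d * \<phi> (\<pi> t d)) / n = (\<Sum>x\<in>?S. ?P x * \<phi> ((\<lambda>(d, t). \<pi> t d) x))"
    by (simp add: sum.cartesian_product' sum.swap[of _ S] sum_divide_distrib)
  also have "\<dots> = (\<Sum>s\<in>S'. P' s * \<phi> s)"
    using assms(4,5) by (subst sum_mult_comp_eq_sum_law_superset[OF _ assms(3)]) (use fin in auto)
  finally show ?thesis using assms(2) by (simp add: divide_eq_eq mult.commute)
qed

text \<open>Forgetting the time index can only increase conditional entropy.\<close>

lemma sum_cond_ent_le_time_sharing:
  fixes \<pi> :: "nat \<Rightarrow> 'd \<Rightarrow> 's"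
  assumes "pmf_on S P" "0 < n" "finite S'" "\<And>t. t < n \<Longrightarrow> \<pi> t ` S \<subseteq> S'"
    "\<And>s. s \<in> S' \<Longrightarrow> law (S \<times> {..<n}) (\<lambda>(d, t). P d / n) (\<lambda>(d, t). \<pi> t d) s = P' s"
  shows "(\<Sum>t<n. cond_ent S P (\<lambda>d. \<alpha> (\<pi> t d)) (\<lambda>d. \<beta> (\<pi> t d))) \<le> real n * cond_ent S' P' \<alpha> \<beta>"
proof -
  have fin: "finite S" using assms unfolding pmf_on_def by auto
  let ?S = "S \<times> {..<n}" and ?P = "\<lambda>(d, t). P d / real n" and ?\<pi> = "\<lambda>(d, t). \<pi> t d"
  have fin': "finite ?S" using fin by auto
  have img: "?\<pi> ` ?S \<subseteq> S'" using assms(4) by auto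
  have "(\<Sum>t<n. cond_ent S P (\<lambda>d. \<alpha> (\<pi> t d)) (\<lambda>d. \<beta> (\<pi> t d))) / n
      = cond_ent ?S ?P (\<lambda>(d, t). \<alpha> (\<pi> t d)) (\<lambda>(d, t). (\<beta> (\<pi> t d), t))"
    by (rule cond_ent_time_sharing[OF assms(1,2), symmetric])
  also have "\<dots> \<le> cond_ent ?S ?P (\<lambda>(d, t). \<alpha> (\<pi> t d)) (\<lambda>(d, t). \<beta> (\<pi> t d))"
    by (rule cond_ent_le_if_determines[OF pmf_on_time_sharing[OF assms(1,2)]]) auto
  also have "\<dots> = cond_ent S' P' \<alpha> \<beta>"
  proof -
    have "ent ?S ?P (\<lambda>x. ((\<lambda>(d, t). \<alpha> (\<pi> t d)) x, (\<lambda>(d, t). \<beta> (\<pi> t d)) x)) = ent S' P' (\<lambda>s. (\<alpha> s, \<beta> s))"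
      by (rule ent_comp_law[OF fin' assms(3) img assms(5)]) auto
    moreover have "ent ?S ?P (\<lambda>(d, t). \<beta> (\<pi> t d)) = ent S' P' \<beta>"
      by (rule ent_comp_law[OF fin' assms(3) img assms(5)]) auto
    ultimately show ?thesis unfolding cond_ent_def by simp
  qed
  finally show ?thesis using assms(2) by (simp add: divide_le_eq mult.commute)
qed

section \<open>The distribution induced by a code\<close>

lemma sum_PiE_prod_fixed:
  fixes f :: "'i \<Rightarrow> 'x \<Rightarrow> real"
  assumes "finite I" "t \<in> I" "\<And>s. s \<in> I \<Longrightarrow> finite (B s)" "e \<in> B t"
    "\<And>s. s \<in> I \<Longrightarrow> s \<noteq> t \<Longrightarrow> (\<Sum>b\<in>B s. f s b) = 1"
  shows "(\<Sum>g\<in>PiE I B. if g t = e then (\<Prod>s\<in>I. f s (g s)) else 0) = f t e"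
proof -
  let ?B = "\<lambda>s. if s = t then {e} else B s"
  have "(\<Sum>g\<in>PiE I B. if g t = e then (\<Prod>s\<in>I. f s (g s)) else 0)
      = (\<Sum>g\<in>{g\<in>PiE I B. g t = e}. \<Prod>s\<in>I. f s (g s))"
    using assms by (simp add: sum.inter_filter finite_PiE)
  also have "{g\<in>PiE I B. g t = e} = PiE I ?B"
    using assms(2,4) by (auto simp: PiE_def Pi_def)
  also have "(\<Sum>g\<in>PiE I ?B. \<Prod>s\<in>I. f s (g s)) = (\<Prod>s\<in>I. \<Sum>b\<in>?B s. f s b)"
    by (rule prod_sum_PiE[symmetric]) (use assms in auto)
  also have "\<dots> = (\<Prod>s\<in>I. if s = t then f t e else 1)"
    by (intro prod.cong refl) (use assms in auto)
  also have "\<dots> = f t e" using assms(1,2) by (simp add: prod.delta)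
  finally show ?thesis .
qed

lemma sum_PiE_prod_eq_one:
  fixes f :: "'i \<Rightarrow> 'x \<Rightarrow> real"
  assumes "finite I" "\<And>s. s \<in> I \<Longrightarrow> finite (B s)" "\<And>s. s \<in> I \<Longrightarrow> (\<Sum>b\<in>B s. f s b) = 1"
  shows "(\<Sum>g\<in>PiE I B. \<Prod>s\<in>I. f s (g s)) = 1"
  using prod_sum_PiE[of I B f, symmetric] assms by simp

definition input_pmf_at ::
  "nat \<Rightarrow> (nat \<Rightarrow> nat) \<Rightarrow> (nat \<Rightarrow> nat) \<Rightarrow> (nat \<Rightarrow> nat \<Rightarrow> 'a) \<Rightarrow> (nat \<Rightarrow> nat \<Rightarrow> 'b) \<Rightarrow> nat \<Rightarrow> 'a \<Rightarrow> 'b \<Rightarrow> real"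
  where "input_pmf_at M f1 f2 g1 g2 t x1 x2 =
    (\<Sum>w<M. if g1 (f1 w) t = x1 \<and> g2 (f2 w) t = x2 then 1 / real M else 0)"

definition avg_input_pmf ::
  "nat \<Rightarrow> nat \<Rightarrow> (nat \<Rightarrow> nat) \<Rightarrow> (nat \<Rightarrow> nat) \<Rightarrow> (nat \<Rightarrow> nat \<Rightarrow> 'a) \<Rightarrow> (nat \<Rightarrow> nat \<Rightarrow> 'b) \<Rightarrow> 'a \<Rightarrow> 'b \<Rightarrow> real"
  where "avg_input_pmf M n f1 f2 g1 g2 x1 x2 = (\<Sum>t<n. input_pmf_at M f1 f2 g1 g2 t x1 x2) / real n"

lemma input_pmf_at_nonneg: "0 \<le> input_pmf_at M f1 f2 g1 g2 t x1 x2"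
  unfolding input_pmf_at_def by (intro sum_nonneg) auto

lemma sum_input_pmf_at:
  fixes g1 :: "nat \<Rightarrow> nat \<Rightarrow> 'a::finite" and g2 :: "nat \<Rightarrow> nat \<Rightarrow> 'b::finite"
  assumes "0 < M"
  shows "(\<Sum>x1\<in>UNIV. \<Sum>x2\<in>UNIV. input_pmf_at M f1 f2 g1 g2 t x1 x2) = 1"
proof -
  have "(\<Sum>x1\<in>UNIV. \<Sum>x2\<in>UNIV. input_pmf_at M f1 f2 g1 g2 t x1 x2)
      = (\<Sum>w<M. \<Sum>x1\<in>UNIV. \<Sum>x2\<in>UNIV. if g1 (f1 w) t = x1 \<and> g2 (f2 w) t = x2 then 1 / real M else 0)"
    unfolding input_pmf_at_def by (simp add: sum.swap[of _ "{..<M}"])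
  also have "\<dots> = (\<Sum>w<M. 1 / real M)"
  proof (rule sum.cong[OF refl])
    fix w
    have "(\<Sum>x1\<in>UNIV. \<Sum>x2\<in>UNIV. if g1 (f1 w) t = x1 \<and> g2 (f2 w) t = x2 then 1 / real M else 0)
      = (\<Sum>x1\<in>UNIV. if g1 (f1 w) t = x1 then 1 / real M else 0)"
      by (intro sum.cong refl) (auto simp: sum.delta)
    then show "(\<Sum>x1\<in>UNIV. \<Sum>x2\<in>UNIV. if g1 (f1 w) t = x1 \<and> g2 (f2 w) t = x2 then 1 / real M else 0)
      = 1 / real M" by (simp add: sum.delta)
  qed
  finally show ?thesis using assms by simp
qed

lemma avg_input_pmf_in_input_pmfs:
  fixes g1 :: "nat \<Rightarrow> nat \<Rightarrow> 'a::finite" and g2 :: "nat \<Rightarrow> nat \<Rightarrow> 'b::finite"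
  assumes "0 < M" "0 < n"
  shows "avg_input_pmf M n f1 f2 g1 g2 \<in> input_pmfs"
proof -
  have "(\<Sum>x1\<in>UNIV. \<Sum>x2\<in>UNIV. avg_input_pmf M n f1 f2 g1 g2 x1 x2)
      = (\<Sum>t<n. \<Sum>x1\<in>UNIV. \<Sum>x2\<in>UNIV. input_pmf_at M f1 f2 g1 g2 t x1 x2) / real n"
    unfolding avg_input_pmf_def by (simp add: sum_divide_distrib[symmetric] sum.swap[of _ "{..<n}"])
  then show ?thesis
    using assms unfolding input_pmfs_def avg_input_pmf_def
    by (simp add: sum_input_pmf_at input_pmf_at_nonneg sum_nonneg)
qed

text \<open>Coordinates of a letter \<open>(x\<^sub>1, x\<^sub>2, y, u)\<close>, written exactly as they appear in
  \<open>bound_term\<close>.\<close>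

abbreviation letter_x1 :: "'a \<times> 'b \<times> 'c \<times> 'd \<Rightarrow> 'a" where "letter_x1 \<equiv> \<lambda>(x1, x2, y, u). x1"
abbreviation letter_x2 :: "'a \<times> 'b \<times> 'c \<times> 'd \<Rightarrow> 'b" where "letter_x2 \<equiv> \<lambda>(x1, x2, y, u). x2"
abbreviation letter_y :: "'a \<times> 'b \<times> 'c \<times> 'd \<Rightarrow> 'c" where "letter_y \<equiv> \<lambda>(x1, x2, y, u). y"
abbreviation letter_u :: "'a \<times> 'b \<times> 'c \<times> 'd \<Rightarrow> 'd" where "letter_u \<equiv> \<lambda>(x1, x2, y, u). u"
abbreviation letter_x12 :: "'a \<times> 'b \<times> 'c \<times> 'd \<Rightarrow> 'a \<times> 'b" where
  "letter_x12 \<equiv> \<lambda>s. (letter_x1 s, letter_x2 s)"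

text \<open>The joint law of message, output block and auxiliary block for a code of block length
  \<open>n\<close> with \<open>M\<close> messages, \<open>q(u|y)\<close> being applied letter by letter; \<open>letter_pmf\<close> is the law of the
  letter at a uniformly random time (\<open>law_time_sharing_letter\<close>).\<close>

locale diamond_code =
  fixes W :: "'a::finite \<Rightarrow> 'b::finite \<Rightarrow> 'c::finite \<Rightarrow> real"
    and M n k :: nat and f1 f2 :: "nat \<Rightarrow> nat"
    and g1 :: "nat \<Rightarrow> nat \<Rightarrow> 'a" and g2 :: "nat \<Rightarrow> nat \<Rightarrow> 'b"
    and q :: "'c \<Rightarrow> nat \<Rightarrow> real"
  assumes channel: "is_channel W" and M_pos: "0 < M" and n_pos: "0 < n"
    and aux_channel: "(k, q) \<in> aux_channels"
begin

definition Yseqs :: "(nat \<Rightarrow> 'c) set" where "Yseqs = PiE {..<n} (\<lambda>_. UNIV)"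
definition Useqs :: "(nat \<Rightarrow> nat) set" where "Useqs = PiE {..<n} (\<lambda>_. {..<k})"
definition block_space :: "(nat \<times> (nat \<Rightarrow> 'c) \<times> (nat \<Rightarrow> nat)) set" where
  "block_space = {..<M} \<times> Yseqs \<times> Useqs"

definition block_kernel :: "nat \<times> nat \<Rightarrow> (nat \<Rightarrow> 'c) \<times> (nat \<Rightarrow> nat) \<Rightarrow> real" where
  "block_kernel v b = (\<Prod>t<n. W (g1 (fst v) t) (g2 (snd v) t) (fst b t) * q (fst b t) (snd b t))"

definition block_pmf :: "nat \<times> (nat \<Rightarrow> 'c) \<times> (nat \<Rightarrow> nat) \<Rightarrow> real" where
  "block_pmf = (\<lambda>(w, b). 1 / real M * block_kernel (f1 w, f2 w) b)"

definition letter :: "nat \<Rightarrow> nat \<times> (nat \<Rightarrow> 'c) \<times> (nat \<Rightarrow> nat) \<Rightarrow> 'a \<times> 'b \<times> 'c \<times> nat" where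
  "letter t \<omega> = (g1 (f1 (fst \<omega>)) t, g2 (f2 (fst \<omega>)) t, fst (snd \<omega>) t, snd (snd \<omega>) t)"

definition letter_space :: "('a \<times> 'b \<times> 'c \<times> nat) set" where
  "letter_space = (UNIV::'a set) \<times> (UNIV::'b set) \<times> (UNIV::'c set) \<times> {..<k}"

definition letter_pmf :: "'a \<times> 'b \<times> 'c \<times> nat \<Rightarrow> real" where
  "letter_pmf = (\<lambda>(x1, x2, y, u). avg_input_pmf M n f1 f2 g1 g2 x1 x2 * W x1 x2 y * q y u)"

abbreviation yblock :: "nat \<times> (nat \<Rightarrow> 'c) \<times> (nat \<Rightarrow> nat) \<Rightarrow> nat \<Rightarrow> 'c" where
  "yblock \<omega> \<equiv> fst (snd \<omega>)"
abbreviation ublock :: "nat \<times> (nat \<Rightarrow> 'c) \<times> (nat \<Rightarrow> nat) \<Rightarrow> nat \<Rightarrow> nat" where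
  "ublock \<omega> \<equiv> snd (snd \<omega>)"

abbreviation "block_law \<equiv> law block_space block_pmf"
abbreviation "block_ent \<equiv> ent block_space block_pmf"
abbreviation "block_cond_ent \<equiv> cond_ent block_space block_pmf"
abbreviation "letter_law \<equiv> law letter_space letter_pmf"
abbreviation "letter_cond_ent \<equiv> cond_ent letter_space letter_pmf"
abbreviation "letter_cmi \<equiv> cmi letter_space letter_pmf"
abbreviation "letter_mi \<equiv> mi letter_space letter_pmf"

lemma W_nonneg: "0 \<le> W x1 x2 y" and sum_W: "(\<Sum>y\<in>UNIV. W x1 x2 y) = 1"
  using channel unfolding is_channel_def by auto

lemma q_nonneg: "0 \<le> q y u" and sum_q: "(\<Sum>u<k. q y u) = 1"
  using aux_channel unfolding aux_channels_def by auto

lemma finite_Yseqs: "finite Yseqs" and finite_Useqs: "finite Useqs"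
  and finite_letter_space: "finite letter_space"
  unfolding Yseqs_def Useqs_def letter_space_def by (auto intro!: finite_PiE)

lemma finite_block_space: "finite block_space"
  unfolding block_space_def using finite_Yseqs finite_Useqs by simp

lemma msg_less: "\<omega> \<in> block_space \<Longrightarrow> fst \<omega> < M"
  unfolding block_space_def by auto

lemma block_kernel_split:
  "block_kernel v (y, u) = (\<Prod>t<n. W (g1 (fst v) t) (g2 (snd v) t) (y t)) * (\<Prod>t<n. q (y t) (u t))"
  unfolding block_kernel_def by (simp add: prod.distrib)

lemma block_kernel_nonneg: "0 \<le> block_kernel v b"
  unfolding block_kernel_def using W_nonneg q_nonneg
    by (intro prod_nonneg) (auto intro: mult_nonneg_nonneg)

lemma block_pmf_nonneg: "0 \<le> block_pmf \<omega>"
  unfolding block_pmf_def using block_kernel_nonneg by (auto split: prod.splits)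

lemma sum_prod_q: "(\<Sum>u\<in>Useqs. \<Prod>t<n. q (y t) (u t)) = 1"
  unfolding Useqs_def by (rule sum_PiE_prod_eq_one) (use sum_q in auto)

lemma sum_prod_W: "(\<Sum>y\<in>Yseqs. \<Prod>t<n. W (x1 t) (x2 t) (y t)) = 1"
  unfolding Yseqs_def by (rule sum_PiE_prod_eq_one) (use sum_W in auto)

lemma sum_block_pmf_aux:
  "(\<Sum>u\<in>Useqs. block_pmf (w, y, u)) = 1 / real M * (\<Prod>t<n. W (g1 (f1 w) t) (g2 (f2 w) t) (y t))"
proof -
  have "(\<Sum>u\<in>Useqs. block_pmf (w, y, u))
      = 1 / real M * (\<Prod>t<n. W (g1 (f1 w) t) (g2 (f2 w) t) (y t)) * (\<Sum>u\<in>Useqs. \<Prod>t<n. q (y t) (u t))"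
    unfolding block_pmf_def by (simp add: block_kernel_split sum_distrib_left mult.assoc)
  then show ?thesis by (simp add: sum_prod_q)
qed

lemma sum_block_kernel: "(\<Sum>y\<in>Yseqs. \<Sum>u\<in>Useqs. block_kernel v (y, u)) = 1"
  by (simp add: block_kernel_split sum_distrib_left[symmetric] sum_prod_q sum_prod_W)

lemma sum_block_space: "(\<Sum>\<omega>\<in>block_space. F \<omega>) = (\<Sum>w<M. \<Sum>y\<in>Yseqs. \<Sum>u\<in>Useqs. F (w, y, u))"
  unfolding block_space_def by (simp add: sum.cartesian_product)

lemma pmf_on_block_space: "pmf_on block_space block_pmf"
proof -
  have "sum block_pmf block_space
      = (\<Sum>w<M. 1 / real M * (\<Sum>y\<in>Yseqs. \<Sum>u\<in>Useqs. block_kernel (f1 w, f2 w) (y, u)))"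
    unfolding sum_block_space block_pmf_def by (simp add: sum_distrib_left)
  then show ?thesis
    unfolding pmf_on_def using finite_block_space block_pmf_nonneg M_pos
      by (simp add: sum_block_kernel)
qed

lemma law_msg: "w < M \<Longrightarrow> block_law fst w = 1 / real M"
proof -
  assume "w < M"
  then have "{\<omega>\<in>block_space. fst \<omega> = w} = {w} \<times> Yseqs \<times> Useqs" unfolding block_space_def by auto
  then have "block_law fst w = (\<Sum>y\<in>Yseqs. \<Sum>u\<in>Useqs. block_pmf (w, y, u))"
    unfolding law_def by (simp add: sum.cartesian_product')
  then show ?thesis by (simp add: sum_block_pmf_aux sum_divide_distrib[symmetric] sum_prod_W)
qed

lemma letter_in_letter_space: "t < n \<Longrightarrow> \<omega> \<in> block_space \<Longrightarrow> letter t \<omega> \<in> letter_space"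
  unfolding letter_def letter_space_def block_space_def Useqs_def by (auto simp: PiE_def Pi_def)

lemma law_letter:
  assumes "t < n" "e < k"
  shows "block_law (letter t) (a, b, c, e) = input_pmf_at M f1 f2 g1 g2 t a b * W a b c * q c e"
proof -
  define hit where "hit w = (if g1 (f1 w) t = a \<and> g2 (f2 w) t = b then 1 / real M else 0)" for w
  define Wc where "Wc w y = (if y t = c then \<Prod>s<n. W (g1 (f1 w) s) (g2 (f2 w) s) (y s) else 0)" for w y
  have "(if letter t (w, y, u) = (a, b, c, e) then block_pmf (w, y, u) else 0) =
      hit w * (Wc w y * (if u t = e then \<Prod>s<n. q (y s) (u s) else 0))" for w y u
    unfolding letter_def block_pmf_def hit_def Wc_def by (simp add: block_kernel_split)
  then have "block_law (letter t) (a, b, c, e)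
      = (\<Sum>w<M. hit w * (\<Sum>y\<in>Yseqs. Wc w y * (\<Sum>u\<in>Useqs. if u t = e then \<Prod>s<n. q (y s) (u s) else 0)))"
    unfolding law_eq_sum_if[OF finite_block_space] sum_block_space by (simp add: sum_distrib_left)
  also have "\<dots> = (\<Sum>w<M. hit w * (\<Sum>y\<in>Yseqs. Wc w y * q c e))"
  proof -
    have eq: "Wc w y * (\<Sum>u\<in>Useqs. if u t = e then \<Prod>s<n. q (y s) (u s) else 0) = Wc w y * q c e"
      for w y
      using sum_PiE_prod_fixed[of "{..<n}" t "\<lambda>_. {..<k}" e "\<lambda>s. q (y s)"] assms sum_q
      unfolding Useqs_def Wc_def by auto
    show ?thesis by (simp only: eq)
  qed
  also have "\<dots> = (\<Sum>w<M. hit w * (W (g1 (f1 w) t) (g2 (f2 w) t) c * q c e))"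
  proof -
    have "(\<Sum>y\<in>Yseqs. Wc w y) = W (g1 (f1 w) t) (g2 (f2 w) t) c" for w
      using sum_PiE_prod_fixed[of "{..<n}" t "\<lambda>_. UNIV" c "\<lambda>s. W (g1 (f1 w) s) (g2 (f2 w) s)"] assms sum_W
      unfolding Yseqs_def Wc_def by simp
    then show ?thesis by (simp add: sum_distrib_right[symmetric])
  qed
  also have "\<dots> = (\<Sum>w<M. hit w * (W a b c * q c e))"
    by (intro sum.cong refl) (simp add: hit_def)
  also have "\<dots> = input_pmf_at M f1 f2 g1 g2 t a b * W a b c * q c e"
    unfolding input_pmf_at_def hit_def by (simp add: sum_distrib_right mult.assoc)
  finally show ?thesis .
qed

lemma law_time_sharing_letter:
  assumes "s \<in> letter_space"
  shows "law (block_space \<times> {..<n}) (\<lambda>(\<omega>, t). block_pmf \<omega> / real n) (\<lambda>(\<omega>, t). letter t \<omega>) s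
    = letter_pmf s"
proof -
  obtain a b c e where s: "s = (a, b, c, e)" and "e < k" using assms unfolding letter_space_def
    by auto
  have "law (block_space \<times> {..<n}) (\<lambda>(\<omega>, t). block_pmf \<omega> / real n) (\<lambda>(\<omega>, t). letter t \<omega>) s
      = (\<Sum>t<n. block_law (letter t) s) / real n"
  proof -
    have "(if letter t \<omega> = s then block_pmf \<omega> / real n else 0)
        = (if letter t \<omega> = s then block_pmf \<omega> else 0) / real n"
      for t \<omega> by simp
    then show ?thesis
      unfolding law_eq_sum_if[OF finite_cartesian_product[OF finite_block_space finite_lessThan]]
        law_eq_sum_if[OF finite_block_space] sum.cartesian_product' case_prod_conv
      by (simp only: sum.swap[of _ block_space] sum_divide_distrib)
  qed
  also have "\<dots> = (\<Sum>t<n. input_pmf_at M f1 f2 g1 g2 t a b * W a b c * q c e) / real n"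
    unfolding s
      by (rule arg_cong[where f="\<lambda>x. x / _"], rule sum.cong) (simp_all add: law_letter \<open>e < k\<close>)
  also have "\<dots> = letter_pmf s"
    unfolding s letter_pmf_def avg_input_pmf_def by (simp add: sum_distrib_right[symmetric])
  finally show ?thesis .
qed

lemma letter_pmf_nonneg: "0 \<le> letter_pmf s"
  unfolding letter_pmf_def avg_input_pmf_def
  using input_pmf_at_nonneg W_nonneg q_nonneg
  by (auto split: prod.splits intro!: sum_nonneg divide_nonneg_nonneg mult_nonneg_nonneg)

lemma law_letter_x12: "letter_law letter_x12 (x1, x2) = avg_input_pmf M n f1 f2 g1 g2 x1 x2"
proof -
  have "{s\<in>letter_space. letter_x12 s = (x1, x2)} = {x1} \<times> {x2} \<times> UNIV \<times> {..<k}"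
    unfolding letter_space_def
    by auto
  then show ?thesis
    unfolding law_def letter_pmf_def
    by (simp add: sum.cartesian_product' sum_distrib_left[symmetric] mult.assoc sum_q sum_W)
qed

lemma avg_input_pmf_pos:
  assumes "w < M" "t < n"
  shows "0 < avg_input_pmf M n f1 f2 g1 g2 (g1 (f1 w) t) (g2 (f2 w) t)"
proof -
  have "(if g1 (f1 w) t = g1 (f1 w) t \<and> g2 (f2 w) t = g2 (f2 w) t then 1 / real M else 0)
      \<le> input_pmf_at M f1 f2 g1 g2 t (g1 (f1 w) t) (g2 (f2 w) t)"
    unfolding input_pmf_at_def using assms(1) by (intro member_le_sum) auto
  then have "1 / real M \<le> input_pmf_at M f1 f2 g1 g2 t (g1 (f1 w) t) (g2 (f2 w) t)" by simp
  moreover have "input_pmf_at M f1 f2 g1 g2 t (g1 (f1 w) t) (g2 (f2 w) t)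
      \<le> (\<Sum>t'<n. input_pmf_at M f1 f2 g1 g2 t' (g1 (f1 w) t) (g2 (f2 w) t))"
    using assms(2) by (intro member_le_sum) (auto simp: input_pmf_at_nonneg)
  moreover have "0 < 1 / real M" using M_pos by simp
  ultimately have "0 < (\<Sum>t'<n. input_pmf_at M f1 f2 g1 g2 t' (g1 (f1 w) t) (g2 (f2 w) t))"
    by linarith
  then show ?thesis unfolding avg_input_pmf_def using n_pos by simp
qed

lemma letter_pmf_pos:
  assumes "\<omega> \<in> block_space" "0 < block_pmf \<omega>" "t < n"
  shows "0 < letter_pmf (letter t \<omega>)"
proof -
  obtain w y u where \<omega>: "\<omega> = (w, y, u)" "w < M" using assms(1) unfolding block_space_def by auto
  have "block_kernel (f1 w, f2 w) (y, u) \<noteq> 0" using assms(2) unfolding \<omega> block_pmf_def by auto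
  then have "W (g1 (f1 w) t) (g2 (f2 w) t) (y t) * q (y t) (u t) \<noteq> 0"
    unfolding block_kernel_def using assms(3) by (auto simp: prod_zero_iff)
  then have "0 < W (g1 (f1 w) t) (g2 (f2 w) t) (y t)" "0 < q (y t) (u t)"
    using W_nonneg q_nonneg by (auto simp: less_le)
  then show ?thesis
    using avg_input_pmf_pos[OF \<omega>(2) assms(3)] unfolding \<omega> letter_def letter_pmf_def by simp
qed

lemma sum_expectation_log_prod:
  assumes "\<And>s. s \<in> letter_space \<Longrightarrow> 0 < letter_pmf s \<Longrightarrow> 0 < F s"
  shows "(\<Sum>\<omega>\<in>block_space. block_pmf \<omega> * log 2 (\<Prod>t<n. F (letter t \<omega>)))
    = real n * (\<Sum>s\<in>letter_space. letter_pmf s * log 2 (F s))"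
proof -
  have "block_pmf \<omega> * log 2 (\<Prod>t<n. F (letter t \<omega>)) = (\<Sum>t<n. block_pmf \<omega> * log 2 (F (letter t \<omega>)))"
    if "\<omega> \<in> block_space" for \<omega>
  proof (cases "block_pmf \<omega> = 0")
    case False
    then have "0 < block_pmf \<omega>" using block_pmf_nonneg[of \<omega>] by simp
    then have "0 < F (letter t \<omega>)" if "t < n" for t
      using assms letter_in_letter_space letter_pmf_pos \<open>\<omega> \<in> block_space\<close> that by blast
    then have "ln (\<Prod>t<n. F (letter t \<omega>)) = (\<Sum>t<n. ln (F (letter t \<omega>)))"
      by (intro ln_prod) force+
    then show ?thesis by (simp add: log_def sum_divide_distrib[symmetric] sum_distrib_left)
  qed simp
  then have "(\<Sum>\<omega>\<in>block_space. block_pmf \<omega> * log 2 (\<Prod>t<n. F (letter t \<omega>)))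
      = (\<Sum>t<n. \<Sum>\<omega>\<in>block_space. block_pmf \<omega> * log 2 (F (letter t \<omega>)))"
    by (simp add: sum.swap[of _ block_space])
  also have "\<dots> = real n * (\<Sum>s\<in>letter_space. letter_pmf s * log 2 (F s))"
    by (rule sum_expectation_time_sharing[OF pmf_on_block_space n_pos finite_letter_space])
      (auto simp: letter_in_letter_space law_time_sharing_letter)
  finally show ?thesis .
qed

text \<open>Memorylessness: \<open>H(B|W) = n H(\<beta>|X\<^sub>1X\<^sub>2)\<close> when \<open>B\<close> is generated letter by letter
  through \<open>\<kappa>\<close>.\<close>

lemma cond_ent_block_eq:
  assumes block: "\<And>\<omega>. \<omega> \<in> block_space \<Longrightarrow> 0 < block_pmf \<omega> \<Longrightarrow>
      block_law (\<lambda>\<omega>. (B \<omega>, fst \<omega>)) (B \<omega>, fst \<omega>) = block_law fst (fst \<omega>) * (\<Prod>t<n. \<kappa> (letter t \<omega>))"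
    and single: "\<And>s. s \<in> letter_space \<Longrightarrow> 0 < letter_pmf s \<Longrightarrow> 0 < \<kappa> s \<and>
      letter_law (\<lambda>s. (\<beta> s, letter_x12 s)) (\<beta> s, letter_x12 s)
        = letter_law letter_x12 (letter_x12 s) * \<kappa> s"
  shows "block_cond_ent B fst = real n * letter_cond_ent \<beta> letter_x12"
proof -
  have "block_cond_ent B fst = - (\<Sum>\<omega>\<in>block_space. block_pmf \<omega> * log 2 (\<Prod>t<n. \<kappa> (letter t \<omega>)))"
  proof (rule cond_ent_kernel[OF finite_block_space])
    show "\<forall>\<omega>\<in>block_space. 0 \<le> block_pmf \<omega>" using block_pmf_nonneg by simp
    fix \<omega> assume "\<omega> \<in> block_space" "0 < block_pmf \<omega>"
    moreover from this have "0 < (\<Prod>t<n. \<kappa> (letter t \<omega>))"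
      using single letter_in_letter_space letter_pmf_pos by (intro prod_pos) auto
    ultimately show "0 < (\<Prod>t<n. \<kappa> (letter t \<omega>)) \<and> block_law (\<lambda>\<omega>. (B \<omega>, fst \<omega>)) (B \<omega>, fst \<omega>)
        = block_law fst (fst \<omega>) * (\<Prod>t<n. \<kappa> (letter t \<omega>))"
      using block by simp
  qed
  also have "\<dots> = - (real n * (\<Sum>s\<in>letter_space. letter_pmf s * log 2 (\<kappa> s)))"
    using sum_expectation_log_prod[of \<kappa>] single by simp
  also have "\<dots> = real n * letter_cond_ent \<beta> letter_x12"
    using cond_ent_kernel[OF finite_letter_space _ single] letter_pmf_nonneg by simp
  finally show ?thesis .
qed

lemma cond_ent_yblock_msg: "block_cond_ent yblock fst = real n * letter_cond_ent letter_y letter_x12"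
proof (rule cond_ent_block_eq[where \<kappa>="\<lambda>(x1, x2, y, u). W x1 x2 y"])
  fix \<omega> assume "\<omega> \<in> block_space"
  then obtain w y u where \<omega>: "\<omega> = (w, y, u)" "w < M" "y \<in> Yseqs" unfolding block_space_def by auto
  then have "{\<omega>'\<in>block_space. (yblock \<omega>', fst \<omega>') = (y, w)} = {w} \<times> {y} \<times> Useqs" unfolding block_space_def
    by auto
  then have "block_law (\<lambda>\<omega>. (yblock \<omega>, fst \<omega>)) (y, w) = (\<Sum>u\<in>Useqs. block_pmf (w, y, u))"
    unfolding law_def by (simp add: sum.cartesian_product')
  then show "block_law (\<lambda>\<omega>. (yblock \<omega>, fst \<omega>)) (yblock \<omega>, fst \<omega>)
      = block_law fst (fst \<omega>) * (\<Prod>t<n. (\<lambda>(x1, x2, y, u). W x1 x2 y) (letter t \<omega>))"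
    unfolding \<omega>(1) using \<omega>(2) by (simp add: sum_block_pmf_aux law_msg letter_def)
next
  fix s assume "s \<in> letter_space" "0 < letter_pmf s"
  then obtain a b c e where s: "s = (a, b, c, e)" by (cases s) auto
  have "{s'\<in>letter_space. (letter_y s', letter_x12 s') = (c, a, b)} = {a} \<times> {b} \<times> {c} \<times> {..<k}"
    unfolding letter_space_def by auto
  then have "letter_law (\<lambda>s. (letter_y s, letter_x12 s)) (c, a, b)
      = avg_input_pmf M n f1 f2 g1 g2 a b * W a b c"
    unfolding law_def letter_pmf_def
      by (simp add: sum.cartesian_product' sum_distrib_left[symmetric] sum_q)
  moreover have "0 < W a b c" using \<open>0 < letter_pmf s\<close> W_nonneg[of a b c] unfolding s letter_pmf_def
    by (auto simp: less_le)
  ultimately show "0 < (\<lambda>(x1, x2, y, u). W x1 x2 y) s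
      \<and> letter_law (\<lambda>s. (letter_y s, letter_x12 s)) (letter_y s, letter_x12 s)
      = letter_law letter_x12 (letter_x12 s) * (\<lambda>(x1, x2, y, u). W x1 x2 y) s"
    unfolding s by (simp add: law_letter_x12)
qed

lemma cond_ent_yublock_msg:
  "block_cond_ent (\<lambda>\<omega>. (yblock \<omega>, ublock \<omega>)) fst
    = real n * letter_cond_ent (\<lambda>s. (letter_y s, letter_u s)) letter_x12"
proof (rule cond_ent_block_eq[where \<kappa>="\<lambda>(x1, x2, y, u). W x1 x2 y * q y u"])
  fix \<omega> assume "\<omega> \<in> block_space"
  then obtain w y u where \<omega>: "\<omega> = (w, y, u)" "w < M" unfolding block_space_def by auto
  have "{\<omega>'\<in>block_space. ((yblock \<omega>', ublock \<omega>'), fst \<omega>') = ((y, u), w)} = {\<omega>}"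
    using \<open>\<omega> \<in> block_space\<close> \<omega>(1) by auto
  then show "block_law (\<lambda>\<omega>. ((yblock \<omega>, ublock \<omega>), fst \<omega>)) ((yblock \<omega>, ublock \<omega>), fst \<omega>)
      = block_law fst (fst \<omega>) * (\<Prod>t<n. (\<lambda>(x1, x2, y, u). W x1 x2 y * q y u) (letter t \<omega>))"
    unfolding \<omega>(1) law_def using \<omega>(2) law_msg[of w]
    by (simp add: block_pmf_def block_kernel_def letter_def law_def)
next
  fix s assume "s \<in> letter_space" "0 < letter_pmf s"
  then obtain a b c e where s: "s = (a, b, c, e)" by (cases s) auto
  have "{s'\<in>letter_space. ((letter_y s', letter_u s'), letter_x12 s') = ((c, e), a, b)} = {s}"
    using \<open>s \<in> letter_space\<close> unfolding s letter_space_def by auto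
  then have "letter_law (\<lambda>s. ((letter_y s, letter_u s), letter_x12 s)) ((c, e), a, b)
      = avg_input_pmf M n f1 f2 g1 g2 a b * (W a b c * q c e)"
    unfolding law_def s by (simp add: letter_pmf_def)
  moreover have "0 < W a b c * q c e"
    using \<open>0 < letter_pmf s\<close> W_nonneg[of a b c] q_nonneg[of c e] unfolding s letter_pmf_def
    by (auto simp: zero_less_mult_iff)
  ultimately show "0 < (\<lambda>(x1, x2, y, u). W x1 x2 y * q y u) s
      \<and> letter_law (\<lambda>s. ((letter_y s, letter_u s), letter_x12 s)) ((letter_y s, letter_u s), letter_x12 s)
        = letter_law letter_x12 (letter_x12 s) * (\<lambda>(x1, x2, y, u). W x1 x2 y * q y u) s"
    unfolding s by (simp add: law_letter_x12)
qed

lemma cond_ent_ublock_msg: "block_cond_ent ublock fst = real n * letter_cond_ent letter_u letter_x12"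
proof (rule cond_ent_block_eq[where \<kappa>="\<lambda>(x1, x2, y, u). \<Sum>c\<in>UNIV. W x1 x2 c * q c u"])
  fix \<omega> assume "\<omega> \<in> block_space"
  then obtain w y u where \<omega>: "\<omega> = (w, y, u)" "w < M" "u \<in> Useqs" unfolding block_space_def by auto
  then have "{\<omega>'\<in>block_space. (ublock \<omega>', fst \<omega>') = (u, w)} = {w} \<times> Yseqs \<times> {u}" unfolding block_space_def
    by auto
  then have "block_law (\<lambda>\<omega>. (ublock \<omega>, fst \<omega>)) (u, w)
      = 1 / real M * (\<Sum>y'\<in>Yseqs. \<Prod>t<n. W (g1 (f1 w) t) (g2 (f2 w) t) (y' t) * q (y' t) (u t))"
    unfolding law_def
      by (simp add: sum.cartesian_product' block_pmf_def block_kernel_def sum_distrib_left)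
  also have "(\<Sum>y'\<in>Yseqs. \<Prod>t<n. W (g1 (f1 w) t) (g2 (f2 w) t) (y' t) * q (y' t) (u t))
      = (\<Prod>t<n. \<Sum>c\<in>UNIV. W (g1 (f1 w) t) (g2 (f2 w) t) c * q c (u t))"
    unfolding Yseqs_def by (rule prod_sum_PiE[symmetric]) auto
  finally show "block_law (\<lambda>\<omega>. (ublock \<omega>, fst \<omega>)) (ublock \<omega>, fst \<omega>)
      = block_law fst (fst \<omega>) * (\<Prod>t<n. (\<lambda>(x1, x2, y, u). \<Sum>c\<in>UNIV. W x1 x2 c * q c u) (letter t \<omega>))"
    unfolding \<omega>(1) using \<omega>(2) by (simp add: law_msg letter_def)
next
  fix s assume "s \<in> letter_space" "0 < letter_pmf s"
  then obtain a b c e where s: "s = (a, b, c, e)" "e < k" unfolding letter_space_def by auto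
  have "0 < W a b c * q c e"
    using \<open>0 < letter_pmf s\<close> W_nonneg[of a b c] q_nonneg[of c e] unfolding s letter_pmf_def
    by (auto simp: zero_less_mult_iff)
  moreover have "W a b c * q c e \<le> (\<Sum>c'\<in>UNIV. W a b c' * q c' e)"
    using W_nonneg q_nonneg by (intro member_le_sum) auto
  moreover have "{s'\<in>letter_space. (letter_u s', letter_x12 s') = (e, a, b)} = {a} \<times> {b} \<times> UNIV \<times> {e}"
    using s(2) unfolding letter_space_def by auto
  then have "letter_law (\<lambda>s. (letter_u s, letter_x12 s)) (e, a, b)
      = avg_input_pmf M n f1 f2 g1 g2 a b * (\<Sum>c'\<in>UNIV. W a b c' * q c' e)"
    unfolding law_def letter_pmf_def
      by (simp add: sum.cartesian_product' sum_distrib_left mult.assoc)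
  ultimately show "0 < (\<lambda>(x1, x2, y, u). \<Sum>c\<in>UNIV. W x1 x2 c * q c u) s
      \<and> letter_law (\<lambda>s. (letter_u s, letter_x12 s)) (letter_u s, letter_x12 s)
        = letter_law letter_x12 (letter_x12 s) * (\<lambda>(x1, x2, y, u). \<Sum>c\<in>UNIV. W x1 x2 c * q c u) s"
    unfolding s by (simp add: law_letter_x12)
qed

lemma block_cond_ent_le:
  assumes "\<And>\<omega>. \<omega> \<in> block_space \<Longrightarrow> A \<omega> = (\<lambda>t\<in>{..<n}. \<alpha> (letter t \<omega>))"
    "\<And>t \<omega> \<omega>'. t < n \<Longrightarrow> \<omega> \<in> block_space \<Longrightarrow> \<omega>' \<in> block_space \<Longrightarrow> G \<omega> = G \<omega>' \<Longrightarrow> \<gamma> (letter t \<omega>) = \<gamma> (letter t \<omega>')"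
  shows "block_cond_ent A G \<le> real n * letter_cond_ent \<alpha> \<gamma>"
proof -
  have "block_cond_ent A G = block_cond_ent (\<lambda>\<omega>. \<lambda>t\<in>{..<n}. \<alpha> (letter t \<omega>)) G"
    by (rule cond_ent_cong[OF finite_block_space]) (simp_all add: assms(1))
  also have "\<dots> \<le> (\<Sum>t<n. block_cond_ent (\<lambda>\<omega>. \<alpha> (letter t \<omega>)) (\<lambda>\<omega>. \<gamma> (letter t \<omega>)))"
    by (rule cond_ent_restrict_le_sum[OF pmf_on_block_space]) (rule assms(2))
  also have "\<dots> \<le> real n * letter_cond_ent \<alpha> \<gamma>"
    by (rule sum_cond_ent_le_time_sharing[OF pmf_on_block_space n_pos finite_letter_space])
      (auto simp: letter_in_letter_space law_time_sharing_letter)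
  finally show ?thesis .
qed

lemma yblock_eq_restrict: "\<omega> \<in> block_space \<Longrightarrow> yblock \<omega> = (\<lambda>t\<in>{..<n}. letter_y (letter t \<omega>))"
  unfolding block_space_def Yseqs_def letter_def by (auto simp: fun_eq_iff PiE_def extensional_def)

lemma ublock_eq_restrict: "\<omega> \<in> block_space \<Longrightarrow> ublock \<omega> = (\<lambda>t\<in>{..<n}. letter_u (letter t \<omega>))"
  unfolding block_space_def Useqs_def letter_def by (auto simp: fun_eq_iff PiE_def extensional_def)

text \<open>The message reaches the channel only through the codeword pair \<open>(V\<^sub>1, V\<^sub>2)\<close>.\<close>

lemma msg_markov: "cmi block_space block_pmf fst (\<lambda>\<omega>. \<phi> (snd \<omega>)) (\<lambda>\<omega>. (f1 (fst \<omega>), f2 (fst \<omega>))) = 0"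
proof -
  have "sum (block_kernel v) (Yseqs \<times> Useqs) = 1" for v
    using sum_block_kernel[of v] by (simp add: sum.cartesian_product)
  then show ?thesis
    using cmi_kernel_markov[of "{..<M}" "Yseqs \<times> Useqs" "\<lambda>_. 1 / real M" block_kernel "\<lambda>w. (f1 w, f2 w)" \<phi>]
      finite_Yseqs finite_Useqs block_kernel_nonneg
    unfolding block_space_def block_pmf_def by simp
qed

lemma ent_msg: "block_ent fst = log 2 (real M)"
proof -
  have "block_ent fst = - (\<Sum>\<omega>\<in>block_space. block_pmf \<omega> * log 2 (1 / real M))"
    unfolding ent_eq_expectation[OF finite_block_space] by (simp add: msg_less law_msg)
  also have "\<dots> = log 2 (real M)"
    using pmf_on_block_space M_pos unfolding pmf_on_def
    by (simp add: sum_negf sum_distrib_right[symmetric] log_divide)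
  finally show ?thesis .
qed

lemma ent_codeword: "block_ent (\<lambda>\<omega>. f (fst \<omega>)) = ent {..<M} (\<lambda>_. 1 / real M) f"
  by (rule ent_comp_law[OF finite_block_space finite_lessThan, of fst]) (use msg_less law_msg in auto)

lemma error_prob_eq:
  "(\<Sum>\<omega>\<in>block_space. block_pmf \<omega> * (if dec (yblock \<omega>) \<noteq> fst \<omega> then 1 else 0))
    = err_prob W n M f1 f2 g1 g2 dec"
proof -
  have "(\<Sum>\<omega>\<in>block_space. block_pmf \<omega> * (if dec (yblock \<omega>) \<noteq> fst \<omega> then 1 else 0))
     = (\<Sum>w<M. \<Sum>y\<in>Yseqs. (if dec y \<noteq> w then 1 else 0) * (\<Sum>u\<in>Useqs. block_pmf (w, y, u)))"
    unfolding sum_block_space by (simp add: sum_distrib_left mult.commute)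
  also have "\<dots> = err_prob W n M f1 f2 g1 g2 dec"
    unfolding err_prob_def Yseqs_def sum_block_pmf_aux
      by (simp add: sum_distrib_left mult.commute mult.left_commute)
  finally show ?thesis .
qed

lemma cond_ent_msg_le_fano:
  assumes "0 < a" "a < 1"
  shows "block_cond_ent fst yblock
    \<le> - log 2 (1 - a) + err_prob W n M f1 f2 g1 g2 dec * (log 2 M - log 2 a)"
  using fano_inequality[OF pmf_on_block_space _ assms, of fst M yblock dec]
  unfolding error_prob_eq by (auto simp: msg_less)

lemma log_msgs_le_coarsening:
  assumes "\<And>t \<omega> \<omega>'. t < n \<Longrightarrow> \<omega> \<in> block_space \<Longrightarrow> \<omega>' \<in> block_space \<Longrightarrow> g (fst \<omega>) = g (fst \<omega>') \<Longrightarrow>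
    \<gamma> (letter t \<omega>) = \<gamma> (letter t \<omega>')"
  shows "log 2 M \<le> block_ent (\<lambda>\<omega>. g (fst \<omega>)) + block_cond_ent fst yblock
    + real n * (letter_cond_ent letter_y \<gamma> - letter_cond_ent letter_y letter_x12)"
proof -
  have "block_cond_ent yblock (\<lambda>\<omega>. g (fst \<omega>)) \<le> real n * letter_cond_ent letter_y \<gamma>"
    by (rule block_cond_ent_le[OF yblock_eq_restrict]) (auto intro: assms)
  then show ?thesis
    using ent_le_ent_comp_add_cond_ent[OF pmf_on_block_space, of fst g yblock] ent_msg cond_ent_yblock_msg
    by (simp add: right_diff_distrib)
qed

lemma log_msgs_le_sum_capacities:
  "log 2 M \<le> ent {..<M} (\<lambda>_. 1 / real M) f1 + ent {..<M} (\<lambda>_. 1 / real M) f2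
    + block_cond_ent fst yblock"
  using ent_le_ent_add_cond_ent_if_markov[OF pmf_on_block_space msg_markov[of fst]]
    ent_pair_le_add[OF pmf_on_block_space, of "\<lambda>\<omega>. f1 (fst \<omega>)" "\<lambda>\<omega>. f2 (fst \<omega>)"] ent_msg
    ent_codeword[of f1] ent_codeword[of f2]
  by linarith

lemma log_msgs_le_cut_x1:
  "log 2 M \<le> ent {..<M} (\<lambda>_. 1 / real M) f1 + block_cond_ent fst yblock
    + real n * letter_cmi letter_x2 letter_y letter_x1"
proof -
  have "letter_cond_ent letter_y (\<lambda>s. (letter_x2 s, letter_x1 s)) = letter_cond_ent letter_y letter_x12"
    by (rule cond_ent_cong[OF finite_letter_space]) auto
  then show ?thesis
    using log_msgs_le_coarsening[of f1 letter_x1] ent_codeword[of f1]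
    by (simp add: cmi_eq_cond_ent_diff[OF finite_letter_space] letter_def)
qed

lemma log_msgs_le_cut_x2:
  "log 2 M \<le> ent {..<M} (\<lambda>_. 1 / real M) f2 + block_cond_ent fst yblock
    + real n * letter_cmi letter_x1 letter_y letter_x2"
  using log_msgs_le_coarsening[of f2 letter_x2] ent_codeword[of f2]
  by (simp add: cmi_eq_cond_ent_diff[OF finite_letter_space] letter_def)

lemma log_msgs_le_mac:
  "log 2 M \<le> block_cond_ent fst yblock + real n * letter_mi letter_x12 letter_y"
proof -
  have "letter_cond_ent letter_y (\<lambda>s. (letter_x12 s, ())) = letter_cond_ent letter_y letter_x12"
    by (rule cond_ent_cong[OF finite_letter_space]) auto
  moreover have "block_ent (\<lambda>_. ()) = 0"
    using pmf_on_block_space unfolding pmf_on_def by (simp add: ent_const)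
  ultimately show ?thesis
    using log_msgs_le_coarsening[of "\<lambda>_. ()" "\<lambda>_. ()"]
    by (simp add: mi_def cmi_eq_cond_ent_diff[OF finite_letter_space])
qed

lemma letter_cmi_sum_eq:
  "letter_cmi letter_x12 letter_y letter_u + letter_cmi letter_x1 letter_u letter_x2
      + letter_cmi letter_x2 letter_u letter_x1
    = letter_cond_ent letter_y letter_u - letter_cond_ent (\<lambda>s. (letter_y s, letter_u s)) letter_x12
      - letter_cond_ent letter_u letter_x12 + letter_cond_ent letter_u letter_x1
      + letter_cond_ent letter_u letter_x2"
proof -
  have "letter_cond_ent letter_u (\<lambda>s. (letter_x2 s, letter_x1 s)) = letter_cond_ent letter_u letter_x12"
    "letter_cond_ent (\<lambda>s. (letter_y s, letter_u s)) letter_x12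
      = letter_cond_ent (\<lambda>s. (letter_u s, letter_y s)) letter_x12"
    "letter_cond_ent letter_y (\<lambda>s. (letter_u s, letter_x12 s))
      = letter_cond_ent letter_y (\<lambda>s. (letter_x12 s, letter_u s))"
    by (rule cond_ent_cong[OF finite_letter_space]; auto)+
  then show ?thesis
    using cond_ent_chain[OF finite_letter_space, of letter_pmf letter_u letter_y letter_x12]
    unfolding cmi_eq_cond_ent_diff[OF finite_letter_space] by simp
qed

lemma two_log_msgs_le_cooperation:
  "2 * log 2 M \<le> ent {..<M} (\<lambda>_. 1 / real M) f1 + ent {..<M} (\<lambda>_. 1 / real M) f2
    + 2 * block_cond_ent fst yblock
    + real n * (letter_cmi letter_x12 letter_y letter_u + letter_cmi letter_x1 letter_u letter_x2
      + letter_cmi letter_x2 letter_u letter_x1)"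
proof -
  have Y_U: "block_cond_ent yblock ublock \<le> real n * letter_cond_ent letter_y letter_u"
    by (rule block_cond_ent_le[OF yblock_eq_restrict]) (auto simp: letter_def)
  have U_V1: "block_cond_ent ublock (\<lambda>\<omega>. f1 (fst \<omega>)) \<le> real n * letter_cond_ent letter_u letter_x1"
    by (rule block_cond_ent_le[OF ublock_eq_restrict]) (auto simp: letter_def)
  have U_V2: "block_cond_ent ublock (\<lambda>\<omega>. f2 (fst \<omega>)) \<le> real n * letter_cond_ent letter_u letter_x2"
    by (rule block_cond_ent_le[OF ublock_eq_restrict]) (auto simp: letter_def)
  have "real n * (letter_cmi letter_x12 letter_y letter_u + letter_cmi letter_x1 letter_u letter_x2
      + letter_cmi letter_x2 letter_u letter_x1)
    = real n * letter_cond_ent letter_y letter_u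
      - real n * letter_cond_ent (\<lambda>s. (letter_y s, letter_u s)) letter_x12
      - real n * letter_cond_ent letter_u letter_x12 + real n * letter_cond_ent letter_u letter_x1
      + real n * letter_cond_ent letter_u letter_x2"
    unfolding letter_cmi_sum_eq by (simp add: algebra_simps)
  then show ?thesis
    using two_ent_le_markov_pair[OF pmf_on_block_space msg_markov[of fst] msg_markov[of snd]]
      Y_U U_V1 U_V2 ent_msg ent_codeword[of f1] ent_codeword[of f2]
      cond_ent_yublock_msg cond_ent_ublock_msg
    by linarith
qed

lemma bound_term_avg_input_pmf:
  "bound_term W C1 C2 (avg_input_pmf M n f1 f2 g1 g2) k q =
    min (C1 + C2)
    (min (C1 + letter_cmi letter_x2 letter_y letter_x1)
    (min (C2 + letter_cmi letter_x1 letter_y letter_x2)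
    (min (letter_mi letter_x12 letter_y)
      ((C1 + C2 + letter_cmi letter_x12 letter_y letter_u + letter_cmi letter_x1 letter_u letter_x2
        + letter_cmi letter_x2 letter_u letter_x1) / 2))))"
  unfolding bound_term_def Let_def letter_space_def letter_pmf_def by simp

lemma log_msgs_le_bound_term:
  assumes a: "0 < a" "a < 1" and err: "err_prob W n M f1 f2 g1 g2 dec \<le> a"
    and C1: "ent {..<M} (\<lambda>_. 1 / real M) f1 \<le> real n * C1"
    and C2: "ent {..<M} (\<lambda>_. 1 / real M) f2 \<le> real n * C2"
  shows "(1 - a) * log 2 M \<le> real n * bound_term W C1 C2 (avg_input_pmf M n f1 f2 g1 g2) k q
    + (- log 2 (1 - a) - a * log 2 a)"
proof -
  let ?L = "log 2 (real M)" and ?G = "- log 2 (1 - a) - a * log 2 a"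
  have "0 \<le> ?L" "log 2 a < 0" using M_pos a by simp_all
  then have "err_prob W n M f1 f2 g1 g2 dec * (?L - log 2 a) \<le> a * (?L - log 2 a)"
    using err by (intro mult_right_mono) auto
  then have fano: "block_cond_ent fst yblock \<le> ?G + a * ?L"
    using cond_ent_msg_le_fano[OF a, of dec] by (simp add: algebra_simps)
  have "(1 - a) * ?L \<le> real n * (C1 + C2) + ?G"
    using log_msgs_le_sum_capacities fano C1 C2 by (simp add: algebra_simps)
  moreover have "(1 - a) * ?L \<le> real n * (C1 + letter_cmi letter_x2 letter_y letter_x1) + ?G"
    using log_msgs_le_cut_x1 fano C1 by (simp add: algebra_simps)
  moreover have "(1 - a) * ?L \<le> real n * (C2 + letter_cmi letter_x1 letter_y letter_x2) + ?G"
    using log_msgs_le_cut_x2 fano C2 by (simp add: algebra_simps)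
  moreover have "(1 - a) * ?L \<le> real n * letter_mi letter_x12 letter_y + ?G"
    using log_msgs_le_mac fano by (simp add: algebra_simps)
  moreover have "(1 - a) * ?L \<le> real n * ((C1 + C2 + letter_cmi letter_x12 letter_y letter_u
      + letter_cmi letter_x1 letter_u letter_x2 + letter_cmi letter_x2 letter_u letter_x1) / 2) + ?G"
    using two_log_msgs_le_cooperation fano C1 C2 by (simp add: algebra_simps)
  ultimately show ?thesis
    unfolding bound_term_avg_input_pmf using n_pos by (simp add: min_def)
qed

end

section \<open>The converse\<close>

lemma fano_slack_tendsto_zero: "((\<lambda>a::real. - log 2 (1 - a) - a * log 2 a) \<longlongrightarrow> 0) (at_right 0)"
  unfolding log_def by real_asymp

lemma le_of_vanishing_slack:
  fixes R B :: real and G :: "real \<Rightarrow> real"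
  assumes "(G \<longlongrightarrow> 0) (at_right 0)" "\<And>a. 0 < a \<Longrightarrow> a < 1 \<Longrightarrow> (1 - a) * R - G a \<le> B"
  shows "R \<le> B"
proof (rule tendsto_upperbound)
  have "((\<lambda>a. (1 - a) * R - G a) \<longlongrightarrow> (1 - 0) * R - 0) (at_right 0)"
    by (intro tendsto_intros assms(1))
  then show "((\<lambda>a. (1 - a) * R - G a) \<longlongrightarrow> R) (at_right 0)" by simp
  have "eventually (\<lambda>a::real. 0 < a \<and> a < 1) (at_right 0)"
    unfolding eventually_at_right_field by (intro exI[of _ 1]) auto
  then show "eventually (\<lambda>a. (1 - a) * R - G a \<le> B) (at_right 0)"
    by eventually_elim (use assms(2) in auto)
qed simp


lemma pmf_on_bound_term_space:
  assumes "is_channel W" "p \<in> input_pmfs" "(k, q) \<in> aux_channels"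
  shows "pmf_on ((UNIV::'a::finite set) \<times> (UNIV::'b::finite set) \<times> (UNIV::'c::finite set) \<times> {..<k})
     (\<lambda>(x1, x2, y, u). p x1 x2 * W x1 x2 y * q y u)"
proof -
  have "sum (\<lambda>(x1, x2, y, u). p x1 x2 * W x1 x2 y * q y u) (UNIV \<times> UNIV \<times> UNIV \<times> {..<k})
      = (\<Sum>x1\<in>UNIV. \<Sum>x2\<in>UNIV. p x1 x2 * (\<Sum>y\<in>UNIV. W x1 x2 y * (\<Sum>u<k. q y u)))"
    by (simp add: sum.cartesian_product[symmetric] sum_distrib_left mult.assoc)
  then show ?thesis
    using assms unfolding pmf_on_def is_channel_def input_pmfs_def aux_channels_def by simp
qed

lemma bound_term_nonneg:
  assumes "is_channel W" "p \<in> input_pmfs" "(k, q) \<in> aux_channels" "0 \<le> C1" "0 \<le> C2"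
  shows "0 \<le> bound_term W C1 C2 p k q"
proof -
  note pmf = pmf_on_bound_term_space[OF assms(1-3)]
  show ?thesis
    unfolding bound_term_def Let_def mi_def using assms(4,5) by (simp add: cmi_nonneg[OF pmf])
qed

lemma bound_term_le: "bound_term W C1 C2 p k q \<le> C1 + C2"
  unfolding bound_term_def Let_def by simp

lemma trivial_aux_channel: "(1, \<lambda>_ _. 1) \<in> aux_channels"
  unfolding aux_channels_def by simp

lemma INF_bound_term_le:
  assumes "is_channel W" "p \<in> input_pmfs" "0 \<le> C1" "0 \<le> C2"
  shows "bdd_below ((\<lambda>kq. bound_term W C1 C2 p (fst kq) (snd kq)) ` aux_channels)"
    and "(INF kq\<in>aux_channels. bound_term W C1 C2 p (fst kq) (snd kq)) \<le> C1 + C2"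
proof -
  show bdd: "bdd_below ((\<lambda>kq. bound_term W C1 C2 p (fst kq) (snd kq)) ` aux_channels)"
    by (rule bdd_belowI[where m=0]) (use bound_term_nonneg[OF assms(1,2) _ assms(3,4)] in auto)
  show "(INF kq\<in>aux_channels. bound_term W C1 C2 p (fst kq) (snd kq)) \<le> C1 + C2"
    using cINF_lower[OF bdd trivial_aux_channel] bound_term_le[of W C1 C2 p 1 "\<lambda>_ _. 1"] by simp
qed

lemma INF_bound_term_le_diamond_bound:
  assumes "is_channel W" "p \<in> input_pmfs" "0 \<le> C1" "0 \<le> C2"
  shows "(INF kq\<in>aux_channels. bound_term W C1 C2 p (fst kq) (snd kq)) \<le> diamond_bound W C1 C2"
  unfolding diamond_bound_def
proof (rule cSUP_upper[OF assms(2)])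
  show "bdd_above ((\<lambda>p. INF kq\<in>aux_channels. bound_term W C1 C2 p (fst kq) (snd kq)) ` input_pmfs)"
    by (rule bdd_aboveI[where M="C1 + C2"]) (use INF_bound_term_le(2)[OF assms(1) _ assms(3,4)] in auto)
qed

lemma rate_le_log_num_msgs: "0 < num_msgs n R" "real n * R \<le> log 2 (num_msgs n R)"
proof -
  have "0 < 2 powr (real n * R)" by simp
  moreover have "2 powr (real n * R) \<le> real (num_msgs n R)"
    unfolding num_msgs_def by (simp add: of_nat_nat)
  ultimately have "0 < real (num_msgs n R)" by linarith
  then show "0 < num_msgs n R" by simp
  show "real n * R \<le> log 2 (num_msgs n R)"
    using log_mono[of 2 "2 powr (real n * R)" "real (num_msgs n R)"] \<open>0 < real (num_msgs n R)\<close>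
      \<open>2 powr (real n * R) \<le> real (num_msgs n R)\<close> by simp
qed

lemma fano_slack_nonneg:
  assumes "0 < a" "a < 1"
  shows "0 \<le> - log 2 (1 - a) - a * log 2 a"
proof -
  have "log 2 (1 - a) \<le> 0" "a * log 2 a < 0" using assms mult_pos_neg[of a "log 2 a"] by simp_all
  then show ?thesis by linarith
qed

lemma achievable_slack_le_diamond_bound:
  fixes W :: "'a::finite \<Rightarrow> 'b::finite \<Rightarrow> 'c::finite \<Rightarrow> real"
  assumes channel: "is_channel W" and C: "0 \<le> C1" "0 \<le> C2"
    and ach: "achievable W C1 C2 R" and a: "0 < a" "a < 1"
  shows "(1 - a) * R - (- log 2 (1 - a) - a * log 2 a) \<le> diamond_bound W C1 C2"
proof -
  let ?G = "- log 2 (1 - a) - a * log 2 a"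
  obtain n f1 f2 and g1 :: "nat \<Rightarrow> nat \<Rightarrow> 'a" and g2 :: "nat \<Rightarrow> nat \<Rightarrow> 'b" and dec :: "(nat \<Rightarrow> 'c) \<Rightarrow> nat"
    where n: "0 < n"
      and C1: "ent {..<num_msgs n R} (\<lambda>_. 1 / real (num_msgs n R)) f1 \<le> real n * C1"
      and C2: "ent {..<num_msgs n R} (\<lambda>_. 1 / real (num_msgs n R)) f2 \<le> real n * C2"
      and err: "err_prob W n (num_msgs n R) f1 f2 g1 g2 dec \<le> a"
    using ach a unfolding achievable_def by blast
  define M where "M = num_msgs n R"
  define p where "p = avg_input_pmf M n f1 f2 g1 g2"
  have "(1 - a) * R - ?G \<le> bound_term W C1 C2 p k q" if "(k, q) \<in> aux_channels" for k q
  proof -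
    interpret diamond_code W M n k f1 f2 g1 g2 q
      using channel rate_le_log_num_msgs(1) n that unfolding M_def by unfold_locales
    have "real n * ((1 - a) * R) \<le> (1 - a) * log 2 (real M)"
      using rate_le_log_num_msgs(2) a unfolding M_def
        by (simp add: mult.left_commute mult_left_mono)
    also have "\<dots> \<le> real n * bound_term W C1 C2 p k q + ?G"
      unfolding p_def
        by (rule log_msgs_le_bound_term[OF a]) (use err C1 C2 in \<open>simp_all add: M_def\<close>)
    also have "\<dots> \<le> real n * (bound_term W C1 C2 p k q + ?G)"
      using fano_slack_nonneg[OF a] n by (simp add: distrib_left mult_le_cancel_right1)
    finally show ?thesis using n by simp
  qed
  then have "(1 - a) * R - ?G \<le> (INF kq\<in>aux_channels. bound_term W C1 C2 p (fst kq) (snd kq))"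
    by (intro cINF_greatest) (use trivial_aux_channel in auto)
  also have "\<dots> \<le> diamond_bound W C1 C2"
    unfolding p_def
    by (intro INF_bound_term_le_diamond_bound avg_input_pmf_in_input_pmfs)
      (use rate_le_log_num_msgs(1) n channel C in \<open>simp_all add: M_def\<close>)
  finally show ?thesis .
qed

lemma achievable_zero:
  fixes W :: "'a::finite \<Rightarrow> 'b::finite \<Rightarrow> 'c::finite \<Rightarrow> real"
  assumes "0 \<le> C1" "0 \<le> C2"
  shows "achievable W C1 C2 0"
  unfolding achievable_def
proof (intro allI impI)
  fix \<epsilon> :: real assume "0 < \<epsilon>"
  let ?f = "\<lambda>_::nat. 0::nat" and ?g1 = "\<lambda>_ _. undefined :: 'a" and ?g2 = "\<lambda>_ _. undefined :: 'b"
    and ?dec = "\<lambda>_::nat \<Rightarrow> 'c. 0::nat"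
  have "num_msgs 1 0 = 1" unfolding num_msgs_def by simp
  moreover have "ent {..<1::nat} (\<lambda>_. 1) ?f = 0" by (rule ent_const) auto
  moreover have "err_prob W 1 1 ?f ?f ?g1 ?g2 ?dec = 0" unfolding err_prob_def by simp
  ultimately have "ent {..<num_msgs 1 0} (\<lambda>_. 1 / real (num_msgs 1 0)) ?f \<le> real 1 * C1
      \<and> ent {..<num_msgs 1 0} (\<lambda>_. 1 / real (num_msgs 1 0)) ?f \<le> real 1 * C2
      \<and> err_prob W 1 (num_msgs 1 0) ?f ?f ?g1 ?g2 ?dec \<le> \<epsilon>"
    using assms \<open>0 < \<epsilon>\<close> by simp
  then show "\<exists>n>0. \<exists>f1 f2 (g1::nat \<Rightarrow> nat \<Rightarrow> 'a) (g2::nat \<Rightarrow> nat \<Rightarrow> 'b) (dec::(nat \<Rightarrow> 'c) \<Rightarrow> nat).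
      ent {..<num_msgs n 0} (\<lambda>_. 1 / real (num_msgs n 0)) f1 \<le> real n * C1
      \<and> ent {..<num_msgs n 0} (\<lambda>_. 1 / real (num_msgs n 0)) f2 \<le> real n * C2
      \<and> err_prob W n (num_msgs n 0) f1 f2 g1 g2 dec \<le> \<epsilon>"
    by (intro exI[of _ 1] conjI zero_less_one) blast
qed

theorem theorem2:
  fixes W :: "'a::finite \<Rightarrow> 'b::finite \<Rightarrow> 'c::finite \<Rightarrow> real"
    and C1 C2 :: real
  assumes "is_channel W" and "0 \<le> C1" and "0 \<le> C2"
  shows "diamond_capacity W C1 C2 \<le> diamond_bound W C1 C2"
proof -
  have "R \<le> diamond_bound W C1 C2" if "achievable W C1 C2 R" for R
    by (rule le_of_vanishing_slack[OF fano_slack_tendsto_zero])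
      (rule achievable_slack_le_diamond_bound[OF assms that])
  then show ?thesis
    unfolding diamond_capacity_def
    by (intro cSup_least) (use achievable_zero[OF assms(2,3), of W] in auto)
qed

end
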